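(* Let $E=(E^0,E^1,r,s)$ be a graph. (a) Let $k$ be a field and $\rho_{E,k}:L_k(E)\to\mathrm{End}_k V_{(\partial E,k)}$ the representation described below. For each $\alpha\in\partial E$ the subspace $V_{([\alpha],k)}:=\mathrm{span}_k[\alpha]$ is $\rho_{E,k}$-invariant and the restriction $\rho_{([\alpha],k)}$ of $\rho_{E,k}$ to it is an irreducible representation of $L_k(E)$. Moreover $V_{(\partial E,k)}=\bigoplus_{[\alpha]\in\widetilde{\partial}E}V_{([\alpha],k)}$ and $\rho_{E,k}=\bigoplus_{[\alpha]\in\widetilde{\partial}E}\rho_{([\alpha],k)}$ is a decomposition of $\rho_{E,k}$ as a direct sum of irreducible representations. For any $\alpha,\beta\in\partial E$ the following are equivalent: (i) $\rho_{([\alpha],k)}$ is algebraically equivalent to $\rho_{([\beta],k)}$; (ii) $\rho_{([\alpha],k)}=\rho_{([\beta],k)}$; (iii) $\alpha$ and $\beta$ are shift-tail equivalent (i.e. $[\alpha]=[\beta]$). (b) Let $\pi_E:C^*(E)\to\mathbb{B}(\mathcal{H}_{\partial E})$ be the $*$-representation described below. For each $\alpha\in\partial E$ the closed subspace $\mathcal{H}_{[\alpha]}:=\ell^2([\alpha])$ is $\pi_E$-invariant and the restriction $\pi_{[\alpha]}$ of $\pi_E$ to it is an irreducible $*$-representation of $C^*(E)$. Moreover $\mathcal{H}_{\partial E}=\bigoplus_{[\alpha]\in\widetilde{\partial}E}\mathcal{H}_{[\alpha]}$ and $\pi_E=\bigoplus_{[\alpha]\in\widetilde{\partial}E}\pi_{[\alpha]}$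 is a decomposition of $\pi_E$ as a direct sum of irreducible representations. For any $\alpha,\beta\in\partial E$ the following are equivalent: (i) $\pi_{[\alpha]}$ is unitarily equivalent to $\pi_{[\beta]}$; (ii) $\pi_{[\alpha]}=\pi_{[\beta]}$; (iii) $[\alpha]=[\beta]$.
   Context: A graph $E=(E^0,E^1,r,s)$ has vertex set $E^0$, edge set $E^1$, range and source maps; no countability assumed. A vertex is singular if it emits no edges or infinitely many edges, regular otherwise. Finite paths include vertices (length $0$, $s(v)=r(v)=v$) and sequences $e_1\cdots e_n$ with $r(e_i)=s(e_{i+1})$; infinite paths are sequences $e_1e_2\cdots$ with $r(e_i)=s(e_{i+1})$. Boundary paths: $\partial E=E^\infty\sqcup E^*_{\mathrm{sing}}$, the infinite paths together with the finite paths whose range is singular. The shift $\sigma_E$ removes the first edge (fixes vertices; sends a single edge $e$ to $r(e)$); $\alpha\sim\beta$ (shift-tail equivalent) if $\sigma_E^m(\alpha)=\sigma_E^n(\beta)$ for some $m,n\in\mathbb{N}$; $[\alpha]$ is the class, $\widetilde{\partial}E$ the set of classes. $L_k(E)$: universal $k$-algebra generated by pairwise orthogonal idempotents $p_v$ and elements $s_e,s_e^*$ with $p_{s(e)}s_e=s_e=s_ep_{r(e)}$, $p_{r(e)}s_e^*=s_e^*=s_e^*p_{s(e)}$, $s_e^*s_f=\delta_{e,f}p_{r(e)}$, $p_v=\sum_{s(e)=v}s_es_e^*$ for regular $v$. $C^*(E)$: universal $C^*$-algebra generated by mutually orthogonal projections $p_v$ and partial isometries $s_e$ with mutually orthogonal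 ranges, $s_e^*s_e=p_{r(e)}$, $s_es_e^*\le p_{s(e)}$, $p_v=\sum_{s(e)=v}s_es_e^*$ for regular $v$. $V_{(\partial E,k)}$ is the $k$-vector space with basis $\partial E$, and $\mathcal{H}_{\partial E}=\ell^2(\partial E)$ the Hilbert space with orthonormal basis $\partial E$. $\rho_{E,k}$ (resp. $\pi_E$) is the (respectively $*$-)representation determined on basis elements $\alpha\in\partial E$ by: $p_v\alpha=\alpha$ if $s(\alpha)=v$, else $0$; $s_e\alpha=e\alpha$ (concatenation) if $s(\alpha)=r(e)$, else $0$; $s_e^*\alpha=\alpha'$ if $\alpha=e\alpha'$, else $0$. Representations $\rho_1,\rho_2$ of a $k$-algebra on $V_1,V_2$ are algebraically equivalent if $\rho_1(a)=T^{-1}\rho_2(a)T$ for all $a$, for some linear isomorphism $T:V_1\to V_2$; $*$-representations are unitarily equivalent if the same holds with $T$ a unitary. Irreducible: no invariant subspaces (closed ones, for Hilbert spaces) other than $0$ and the whole space. *)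

theory Defs
  imports "HOL-Analysis.Analysis"
begin

record ('v,'e) graph =
  verts :: "'v set"
  edges :: "'e set"
  rng   :: "'e \<Rightarrow> 'v"
  src   :: "'e \<Rightarrow> 'v"

definition wf_graph :: "('v,'e) graph \<Rightarrow> bool" where
  "wf_graph G \<longleftrightarrow> rng G ` edges G \<subseteq> verts G \<and> src G ` edges G \<subseteq> verts G"

text \<open>A path is either a finite path (start vertex together with a list of edges;
  the empty list gives the vertex as path of length 0) or an infinite path.\<close>
datatype ('v,'e) path = FinP 'v "'e list" | InfP "nat \<Rightarrow> 'e"

definition emits :: "('v,'e) graph \<Rightarrow> 'v \<Rightarrow> 'e set" where
  "emits G v = {e \<in> edges G. src G e = v}"

definition singular :: "('v,'e) graph \<Rightarrow> 'v \<Rightarrow> bool" where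
  "singular G v \<longleftrightarrow> v \<in> verts G \<and> (emits G v = {} \<or> infinite (emits G v))"

definition fin_path :: "('v,'e) graph \<Rightarrow> 'v \<Rightarrow> 'e list \<Rightarrow> bool" where
  "fin_path G v es \<longleftrightarrow> v \<in> verts G \<and> set es \<subseteq> edges G \<and>
     (es \<noteq> [] \<longrightarrow> src G (hd es) = v) \<and>
     (\<forall>i. Suc i < length es \<longrightarrow> rng G (es ! i) = src G (es ! Suc i))"

definition inf_path :: "('v,'e) graph \<Rightarrow> (nat \<Rightarrow> 'e) \<Rightarrow> bool" where
  "inf_path G f \<longleftrightarrow> (\<forall>n. f n \<in> edges G \<and> rng G (f n) = src G (f (Suc n)))"

fun fin_range :: "('v,'e) graph \<Rightarrow> 'v \<Rightarrow> 'e list \<Rightarrow> 'v" where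
  "fin_range G v es = (if es = [] then v else rng G (last es))"

definition bpaths :: "('v,'e) graph \<Rightarrow> ('v,'e) path set" where
  "bpaths G = {InfP f | f. inf_path G f} \<union>
              {FinP v es | v es. fin_path G v es \<and> singular G (fin_range G v es)}"

fun psrc :: "('v,'e) graph \<Rightarrow> ('v,'e) path \<Rightarrow> 'v" where
  "psrc G (FinP v es) = v"
| "psrc G (InfP f) = src G (f 0)"

fun shift :: "('v,'e) graph \<Rightarrow> ('v,'e) path \<Rightarrow> ('v,'e) path" where
  "shift G (FinP v []) = FinP v []"
| "shift G (FinP v (e # es)) = FinP (rng G e) es"
| "shift G (InfP f) = InfP (\<lambda>n. f (Suc n))"

definition shift_tail :: "('v,'e) graph \<Rightarrow> ('v,'e) path \<Rightarrow> ('v,'e) path \<Rightarrow> bool" where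
  "shift_tail G \<alpha> \<beta> \<longleftrightarrow> (\<exists>m n. (shift G ^^ m) \<alpha> = (shift G ^^ n) \<beta>)"

definition tclass :: "('v,'e) graph \<Rightarrow> ('v,'e) path \<Rightarrow> ('v,'e) path set" where
  "tclass G \<alpha> = {\<beta> \<in> bpaths G. shift_tail G \<beta> \<alpha>}"

definition tclasses :: "('v,'e) graph \<Rightarrow> ('v,'e) path set set" where
  "tclasses G = tclass G ` bpaths G"

fun first_edge :: "('v,'e) path \<Rightarrow> 'e option" where
  "first_edge (FinP v []) = None"
| "first_edge (FinP v (e # es)) = Some e"
| "first_edge (InfP f) = Some (f 0)"

fun cons_edge :: "('v,'e) graph \<Rightarrow> 'e \<Rightarrow> ('v,'e) path \<Rightarrow> ('v,'e) path" where
  "cons_edge G e (FinP v es) = FinP (src G e) (e # es)"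
| "cons_edge G e (InfP f) = InfP (case_nat e f)"

text \<open>Vectors are coefficient functions on paths (supported in the boundary path
  space).  The operators below are the images of the generators under
  rho_{E,k} / pi_E, written in coordinates:
  p_v alpha = alpha if s(alpha)=v; s_e alpha = e alpha if s(alpha)=r(e);
  s_e^* alpha = alpha' if alpha = e alpha'.\<close>

definition opP :: "('v,'e) graph \<Rightarrow> 'v \<Rightarrow> (('v,'e) path \<Rightarrow> 'k::field) \<Rightarrow> (('v,'e) path \<Rightarrow> 'k)" where
  "opP G v f = (\<lambda>\<beta>. if \<beta> \<in> bpaths G \<and> psrc G \<beta> = v then f \<beta> else 0)"

definition opS :: "('v,'e) graph \<Rightarrow> 'e \<Rightarrow> (('v,'e) path \<Rightarrow> 'k::field) \<Rightarrow> (('v,'e) path \<Rightarrow> 'k)" where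
  "opS G e f = (\<lambda>\<beta>. if \<beta> \<in> bpaths G \<and> first_edge \<beta> = Some e then f (shift G \<beta>) else 0)"

definition opSs :: "('v,'e) graph \<Rightarrow> 'e \<Rightarrow> (('v,'e) path \<Rightarrow> 'k::field) \<Rightarrow> (('v,'e) path \<Rightarrow> 'k)" where
  "opSs G e f = (\<lambda>\<beta>. if \<beta> \<in> bpaths G \<and> psrc G \<beta> = rng G e then f (cons_edge G e \<beta>) else 0)"

text \<open>Formal (non-commutative, non-unital) polynomial expressions in the generators
  p_v, s_e, s_e^*.  Every element of L_k(E) (resp. of the dense *-subalgebra of C^*(E)
  generated by the generators) is represented by such an expression, and the
  representation of that element is the evaluation below.\<close>
datatype ('v,'e,'k) lexpr =
    LP 'v | LS 'e | LSs 'e | LZero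
  | LScal 'k "('v,'e,'k) lexpr"
  | LAdd "('v,'e,'k) lexpr" "('v,'e,'k) lexpr"
  | LMul "('v,'e,'k) lexpr" "('v,'e,'k) lexpr"

fun wf_expr :: "('v,'e) graph \<Rightarrow> ('v,'e,'k) lexpr \<Rightarrow> bool" where
  "wf_expr G (LP v) = (v \<in> verts G)"
| "wf_expr G (LS e) = (e \<in> edges G)"
| "wf_expr G (LSs e) = (e \<in> edges G)"
| "wf_expr G LZero = True"
| "wf_expr G (LScal c a) = wf_expr G a"
| "wf_expr G (LAdd a b) = (wf_expr G a \<and> wf_expr G b)"
| "wf_expr G (LMul a b) = (wf_expr G a \<and> wf_expr G b)"

fun evalop :: "('v,'e) graph \<Rightarrow> ('v,'e,'k::field) lexpr \<Rightarrow> (('v,'e) path \<Rightarrow> 'k) \<Rightarrow> (('v,'e) path \<Rightarrow> 'k)" where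
  "evalop G (LP v) = opP G v"
| "evalop G (LS e) = opS G e"
| "evalop G (LSs e) = opSs G e"
| "evalop G LZero = (\<lambda>f x. 0)"
| "evalop G (LScal c a) = (\<lambda>f x. c * evalop G a f x)"
| "evalop G (LAdd a b) = (\<lambda>f x. evalop G a f x + evalop G b f x)"
| "evalop G (LMul a b) = (\<lambda>f. evalop G a (evalop G b f))"

text \<open>A representation is recorded as a pair (space, action); the action is
  defined on (expressions for) algebra elements and gives maps on the space.\<close>
type_synonym ('v,'e,'k) rep =
  "(('v,'e) path \<Rightarrow> 'k) set \<times> (('v,'e,'k) lexpr \<Rightarrow> (('v,'e) path \<Rightarrow> 'k) \<Rightarrow> (('v,'e) path \<Rightarrow> 'k))"

definition restrict_rep :: "('v,'e) graph \<Rightarrow> (('v,'e) path \<Rightarrow> 'k::field) set \<Rightarrow> ('v,'e,'k) rep" where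
  "restrict_rep G W = (W, \<lambda>a. if wf_expr G a then (\<lambda>f. if f \<in> W then evalop G a f else undefined)
                               else undefined)"

definition lin_on :: "(('v,'e) path \<Rightarrow> 'k::field) set \<Rightarrow> ((('v,'e) path \<Rightarrow> 'k) \<Rightarrow> (('v,'e) path \<Rightarrow> 'k)) \<Rightarrow> bool" where
  "lin_on A T \<longleftrightarrow> (\<forall>f\<in>A. \<forall>g\<in>A. T (\<lambda>x. f x + g x) = (\<lambda>x. T f x + T g x)) \<and>
                  (\<forall>c. \<forall>f\<in>A. T (\<lambda>x. c * f x) = (\<lambda>x. c * T f x))"

definition is_subspace :: "(('v,'e) path \<Rightarrow> 'k::field) set \<Rightarrow> bool" where
  "is_subspace W \<longleftrightarrow> (\<lambda>x. 0) \<in> W \<and> (\<forall>f\<in>W. \<forall>g\<in>W. (\<lambda>x. f x + g x) \<in> W) \<and>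
                     (\<forall>c. \<forall>f\<in>W. (\<lambda>x. c * f x) \<in> W)"

definition invariant :: "('v,'e) graph \<Rightarrow> ('v,'e,'k::field) rep \<Rightarrow> (('v,'e) path \<Rightarrow> 'k) set \<Rightarrow> bool" where
  "invariant G R W \<longleftrightarrow> (\<forall>a. wf_expr G a \<longrightarrow> (\<forall>f\<in>W. snd R a f \<in> W))"

text \<open>span_k X inside V_(dE,k): finitely supported coefficient functions supported in X.\<close>
definition Vspan :: "(('v,'e) path) set \<Rightarrow> (('v,'e) path \<Rightarrow> 'k::field) set" where
  "Vspan X = {f. finite {x. f x \<noteq> 0} \<and> {x. f x \<noteq> 0} \<subseteq> X}"

definition rho :: "('v,'e) graph \<Rightarrow> ('v,'e,'k::field) rep" where
  "rho G = restrict_rep G (Vspan (bpaths G))"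

definition rho_cls :: "('v,'e) graph \<Rightarrow> ('v,'e) path \<Rightarrow> ('v,'e,'k::field) rep" where
  "rho_cls G \<alpha> = restrict_rep G (Vspan (tclass G \<alpha>))"

definition irreducible_alg :: "('v,'e) graph \<Rightarrow> ('v,'e,'k::field) rep \<Rightarrow> bool" where
  "irreducible_alg G R \<longleftrightarrow>
     (\<forall>W. W \<subseteq> fst R \<and> is_subspace W \<and> invariant G R W \<longrightarrow> W = {\<lambda>x. 0} \<or> W = fst R)"

definition alg_equivalent :: "('v,'e) graph \<Rightarrow> ('v,'e,'k::field) rep \<Rightarrow> ('v,'e,'k) rep \<Rightarrow> bool" where
  "alg_equivalent G R1 R2 \<longleftrightarrow> (\<exists>T. bij_betw T (fst R1) (fst R2) \<and> lin_on (fst R1) T \<and>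
     (\<forall>a. wf_expr G a \<longrightarrow> (\<forall>f\<in>fst R1. snd R1 a f = inv_into (fst R1) T (snd R2 a (T f)))))"

text \<open>Internal direct sum decomposition of V along the family of subspaces indexed by
  the classes, and the corresponding decomposition of the representation.\<close>
definition alg_decomp :: "('v,'e) graph \<Rightarrow> (('v,'e) path \<Rightarrow> 'k::field) \<Rightarrow> (('v,'e) path set \<Rightarrow> (('v,'e) path \<Rightarrow> 'k)) \<Rightarrow> bool" where
  "alg_decomp G f g \<longleftrightarrow> finite {c. g c \<noteq> (\<lambda>x. 0)} \<and> {c. g c \<noteq> (\<lambda>x. 0)} \<subseteq> tclasses G \<and>
     (\<forall>c\<in>tclasses G. g c \<in> Vspan c) \<and>
     f = (\<lambda>x. \<Sum>c\<in>{c. g c \<noteq> (\<lambda>x. 0)}. g c x)"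

definition alg_direct_sum :: "('v,'e) graph \<Rightarrow> ('k::field) itself \<Rightarrow> bool" where
  "alg_direct_sum G _ \<longleftrightarrow> (\<forall>c\<in>tclasses G. Vspan c \<subseteq> (Vspan (bpaths G) :: (_ \<Rightarrow> 'k) set)) \<and>
     (\<forall>f::(_ \<Rightarrow> 'k). f \<in> Vspan (bpaths G) \<longrightarrow> (\<exists>!g. alg_decomp G f g))"

definition alg_rep_direct_sum :: "('v,'e) graph \<Rightarrow> ('k::field) itself \<Rightarrow> bool" where
  "alg_rep_direct_sum G _ \<longleftrightarrow> (\<forall>a::('v,'e,'k) lexpr. wf_expr G a \<longrightarrow>
     (\<forall>f g. f \<in> Vspan (bpaths G) \<and> alg_decomp G f g \<longrightarrow>
        snd (rho G) a f = (\<lambda>x. \<Sum>c\<in>{c. g c \<noteq> (\<lambda>x. 0)}. snd (restrict_rep G (Vspan c)) a (g c) x)))"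

definition ell2 :: "('v,'e) path set \<Rightarrow> (('v,'e) path \<Rightarrow> complex) set" where
  "ell2 X = {f. (\<forall>x. x \<notin> X \<longrightarrow> f x = 0) \<and> (\<lambda>x. (cmod (f x))\<^sup>2) summable_on UNIV}"

definition l2norm :: "(('v,'e) path \<Rightarrow> complex) \<Rightarrow> real" where
  "l2norm f = sqrt (infsum (\<lambda>x. (cmod (f x))\<^sup>2) UNIV)"

definition l2inner :: "(('v,'e) path \<Rightarrow> complex) \<Rightarrow> (('v,'e) path \<Rightarrow> complex) \<Rightarrow> complex" where
  "l2inner f g = infsum (\<lambda>x. cnj (f x) * g x) UNIV"

definition l2closed :: "(('v,'e) path \<Rightarrow> complex) set \<Rightarrow> bool" where
  "l2closed W \<longleftrightarrow> (\<forall>u f. (\<forall>n. u n \<in> W) \<and> f \<in> ell2 UNIV \<and>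
      (\<lambda>n. l2norm (\<lambda>x. u n x - f x)) \<longlonglongrightarrow> 0 \<longrightarrow> f \<in> W)"

definition piE :: "('v,'e) graph \<Rightarrow> ('v,'e,complex) rep" where
  "piE G = restrict_rep G (ell2 (bpaths G))"

definition pi_cls :: "('v,'e) graph \<Rightarrow> ('v,'e) path \<Rightarrow> ('v,'e,complex) rep" where
  "pi_cls G \<alpha> = restrict_rep G (ell2 (tclass G \<alpha>))"

definition irreducible_hil :: "('v,'e) graph \<Rightarrow> ('v,'e,complex) rep \<Rightarrow> bool" where
  "irreducible_hil G R \<longleftrightarrow>
     (\<forall>W. W \<subseteq> fst R \<and> is_subspace W \<and> l2closed W \<and> invariant G R W \<longrightarrow>
          W = {\<lambda>x. 0} \<or> W = fst R)"

definition unitarily_equivalent :: "('v,'e) graph \<Rightarrow> ('v,'e,complex) rep \<Rightarrow> ('v,'e,complex) rep \<Rightarrow> bool" where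
  "unitarily_equivalent G R1 R2 \<longleftrightarrow> (\<exists>U. bij_betw U (fst R1) (fst R2) \<and> lin_on (fst R1) U \<and>
     (\<forall>f\<in>fst R1. \<forall>g\<in>fst R1. l2inner (U f) (U g) = l2inner f g) \<and>
     (\<forall>a. wf_expr G a \<longrightarrow> (\<forall>f\<in>fst R1. snd R1 a f = inv_into (fst R1) U (snd R2 a (U f)))))"

definition l2_has_sum :: "(('v,'e) path set \<Rightarrow> (('v,'e) path \<Rightarrow> complex)) \<Rightarrow> ('v,'e) path set set \<Rightarrow> (('v,'e) path \<Rightarrow> complex) \<Rightarrow> bool" where
  "l2_has_sum g C f \<longleftrightarrow> (\<forall>\<epsilon>>0. \<exists>F0. finite F0 \<and> F0 \<subseteq> C \<and>
      (\<forall>F. finite F \<and> F0 \<subseteq> F \<and> F \<subseteq> C \<longrightarrow> l2norm (\<lambda>x. f x - (\<Sum>c\<in>F. g c x)) < \<epsilon>))"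

definition hil_decomp :: "('v,'e) graph \<Rightarrow> (('v,'e) path \<Rightarrow> complex) \<Rightarrow> (('v,'e) path set \<Rightarrow> (('v,'e) path \<Rightarrow> complex)) \<Rightarrow> bool" where
  "hil_decomp G f g \<longleftrightarrow> (\<forall>c\<in>tclasses G. g c \<in> ell2 c) \<and> l2_has_sum g (tclasses G) f"

definition hil_direct_sum :: "('v,'e) graph \<Rightarrow> bool" where
  "hil_direct_sum G \<longleftrightarrow> (\<forall>c\<in>tclasses G. ell2 c \<subseteq> ell2 (bpaths G) \<and> l2closed (ell2 c)) \<and>
     (\<forall>c\<in>tclasses G. \<forall>d\<in>tclasses G. c \<noteq> d \<longrightarrow> (\<forall>f\<in>ell2 c. \<forall>g\<in>ell2 d. l2inner f g = 0)) \<and>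
     (\<forall>f\<in>ell2 (bpaths G). \<exists>g. hil_decomp G f g)"

definition hil_rep_direct_sum :: "('v,'e) graph \<Rightarrow> bool" where
  "hil_rep_direct_sum G \<longleftrightarrow> (\<forall>a. wf_expr G a \<longrightarrow>
     (\<forall>f g. f \<in> ell2 (bpaths G) \<and> hil_decomp G f g \<longrightarrow>
        l2_has_sum (\<lambda>c. snd (restrict_rep G (ell2 c)) a (g c)) (tclasses G) (snd (piE G) a f)))"

end

theory Submission
  imports Defs
begin

text \<open>
  The generators move a boundary path only within its shift-tail class (\<open>s\<^sub>e\<close> prepends an
  edge, \<open>s\<^sub>e\<^sup>*\<close> removes one), so they commute with the coordinate projection onto any union
  of classes; this gives the invariance of each summand and both direct sum decompositions.

  Irreducibility and inequivalence rest on the fact that the algebra separates boundary paths: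
  for \<open>\<alpha>\<close> and finitely many other boundary paths, conjugating by \<open>s\<^sub>e\<close> along a common
  initial segment of edges and finally using \<open>p\<^sub>v - \<Sum>\<^sub>e s\<^sub>e s\<^sub>e\<^sup>*\<close> yields an element acting
  as the projection onto a set of paths that contains \<open>\<alpha>\<close> but none of the others. Applied to a
  vector of an invariant subspace with \<open>\<alpha>\<close> in its support (and, in \<open>\<ell>\<^sup>2\<close>, passing to a
  limit) it produces a multiple of \<open>\<delta>\<^sub>\<alpha>\<close>, from which \<open>s\<^sub>e\<close> and \<open>s\<^sub>e\<^sup>*\<close> reach \<open>\<delta>\<^sub>\<beta>\<close> for every \<open>\<beta>\<close> in the class of \<open>\<alpha>\<close>.
  An intertwiner from the class of \<open>\<alpha>\<close> to another class maps \<open>\<delta>\<^sub>\<alpha>\<close> to a vector fixed by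
  all these projections, hence supported at \<open>\<alpha>\<close>, hence zero.
\<close>

section \<open>Boundary paths and shift-tail classes\<close>

lemma FinP_in_bpaths_iff:
  "FinP v es \<in> bpaths G \<longleftrightarrow> fin_path G v es \<and> singular G (fin_range G v es)"
  by (auto simp: bpaths_def)

lemma InfP_in_bpaths_iff: "InfP f \<in> bpaths G \<longleftrightarrow> inf_path G f"
  by (auto simp: bpaths_def)

lemma psrc_in_verts:
  assumes "wf_graph G" "x \<in> bpaths G"
  shows "psrc G x \<in> verts G"
  using assms
  by (cases x) (auto simp: FinP_in_bpaths_iff InfP_in_bpaths_iff fin_path_def inf_path_def wf_graph_def)

lemma bpaths_first_edge_Some:
  assumes "x \<in> bpaths G" "first_edge x = Some e"
  shows "e \<in> edges G" "psrc G x = src G e" "psrc G (shift G x) = rng G e"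
    and "cons_edge G e (shift G x) = x"
proof -
  have "e \<in> edges G \<and> psrc G x = src G e \<and> psrc G (shift G x) = rng G e \<and> cons_edge G e (shift G x) = x"
  proof (cases x)
    case (FinP v es)
    then obtain es' where "es = e # es'"
      using assms by (cases es) auto
    with assms FinP show ?thesis
      by (cases es') (auto simp: FinP_in_bpaths_iff fin_path_def)
  next
    case (InfP f)
    with assms show ?thesis
      by (auto simp: InfP_in_bpaths_iff inf_path_def fun_eq_iff split: nat.split)
  qed
  then show "e \<in> edges G" "psrc G x = src G e" "psrc G (shift G x) = rng G e"
    and "cons_edge G e (shift G x) = x"
    by auto
qed

lemma first_edge_None_iff: "first_edge x = None \<longleftrightarrow> (\<exists>v. x = FinP v [])"
  by (cases x rule: first_edge.cases) auto

lemma shift_cons_edge: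
  "psrc G x = rng G e \<Longrightarrow> shift G (cons_edge G e x) = x"
  by (cases x) auto

lemma shift_in_bpaths:
  assumes wf: "wf_graph G" and x: "x \<in> bpaths G"
  shows "shift G x \<in> bpaths G"
proof (cases x rule: first_edge.cases)
  case (2 v e es)
  with x have "fin_path G v (e # es)" "singular G (fin_range G v (e # es))"
    by (auto simp: FinP_in_bpaths_iff)
  with wf have "fin_path G (rng G e) es"
    unfolding fin_path_def wf_graph_def by (auto simp: hd_conv_nth)
  with 2 \<open>singular G (fin_range G v (e # es))\<close> show ?thesis
    by (auto simp: FinP_in_bpaths_iff)
qed (use x in \<open>auto simp: InfP_in_bpaths_iff inf_path_def\<close>)

lemma funpow_shift_in_bpaths:
  "wf_graph G \<Longrightarrow> x \<in> bpaths G \<Longrightarrow> (shift G ^^ n) x \<in> bpaths G"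
  by (induction n) (auto simp: shift_in_bpaths)

lemma cons_edge_in_bpaths:
  assumes wf: "wf_graph G" and x: "x \<in> bpaths G" and e: "e \<in> edges G" "psrc G x = rng G e"
  shows "cons_edge G e x \<in> bpaths G"
proof (cases x)
  case (FinP v es)
  with x have "fin_path G v es" "singular G (fin_range G v es)"
    by (auto simp: FinP_in_bpaths_iff)
  with wf e FinP have "fin_path G (src G e) (e # es)"
    unfolding fin_path_def wf_graph_def
    by (auto simp: nth_Cons hd_conv_nth split: nat.split)
  with FinP e \<open>singular G (fin_range G v es)\<close> show ?thesis
    by (auto simp: FinP_in_bpaths_iff)
qed (use x e in \<open>auto simp: InfP_in_bpaths_iff inf_path_def split: nat.split\<close>)

lemma shift_tail_refl: "shift_tail G x x"
  unfolding shift_tail_def by blast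

lemma shift_tail_sym: "shift_tail G x y \<Longrightarrow> shift_tail G y x"
  unfolding shift_tail_def by metis

lemma shift_tail_trans:
  assumes "shift_tail G x y" "shift_tail G y z"
  shows "shift_tail G x z"
proof -
  obtain m n p q where mn: "(shift G ^^ m) x = (shift G ^^ n) y"
    and pq: "(shift G ^^ p) y = (shift G ^^ q) z"
    using assms unfolding shift_tail_def by blast
  have "(shift G ^^ (p + m)) x = (shift G ^^ p) ((shift G ^^ n) y)"
    by (simp add: funpow_add mn)
  also have "\<dots> = (shift G ^^ n) ((shift G ^^ q) z)"
    by (metis pq funpow_add add.commute comp_apply)
  finally show ?thesis
    unfolding shift_tail_def by (metis funpow_add comp_apply)
qed

lemma shift_tail_shift: "shift_tail G (shift G x) x"
  unfolding shift_tail_def by (rule exI[of _ 0], rule exI[of _ 1]) simp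

lemma tclass_subset_bpaths: "tclass G x \<subseteq> bpaths G"
  by (auto simp: tclass_def)

lemma self_in_tclass: "x \<in> bpaths G \<Longrightarrow> x \<in> tclass G x"
  by (auto simp: tclass_def shift_tail_refl)

lemma mem_tclass_iff:
  assumes "x \<in> bpaths G"
  shows "x \<in> tclass G y \<longleftrightarrow> tclass G x = tclass G y"
  using assms shift_tail_trans shift_tail_sym self_in_tclass
  unfolding tclass_def by blast

lemma tclasses_subset_bpaths: "c \<in> tclasses G \<Longrightarrow> c \<subseteq> bpaths G"
  using tclass_subset_bpaths unfolding tclasses_def by blast

lemma mem_tclasses_iff:
  assumes "c \<in> tclasses G" "x \<in> bpaths G"
  shows "x \<in> c \<longleftrightarrow> c = tclass G x"
  using assms mem_tclass_iff unfolding tclasses_def by blast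

lemma tclass_in_tclasses: "x \<in> bpaths G \<Longrightarrow> tclass G x \<in> tclasses G"
  by (simp add: tclasses_def)

definition shift_saturated :: "('v,'e) graph \<Rightarrow> ('v,'e) path set \<Rightarrow> bool" where
  "shift_saturated G X \<longleftrightarrow> X \<subseteq> bpaths G \<and> (\<forall>x\<in>bpaths G. shift G x \<in> X \<longleftrightarrow> x \<in> X)"

lemma shift_saturated_bpaths: "wf_graph G \<Longrightarrow> shift_saturated G (bpaths G)"
  by (auto simp: shift_saturated_def shift_in_bpaths)

lemma shift_saturated_tclass: "wf_graph G \<Longrightarrow> shift_saturated G (tclass G x)"
  unfolding shift_saturated_def tclass_def
  using shift_in_bpaths shift_tail_trans shift_tail_shift shift_tail_sym by blast

lemma shift_saturated_tclasses: "wf_graph G \<Longrightarrow> c \<in> tclasses G \<Longrightarrow> shift_saturated G c"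
  unfolding tclasses_def using shift_saturated_tclass by blast

section \<open>Coordinate projections and projection expressions\<close>

definition proj_on :: "('v,'e) path set \<Rightarrow> (('v,'e) path \<Rightarrow> 'k::zero) \<Rightarrow> ('v,'e) path \<Rightarrow> 'k" where
  "proj_on A f = (\<lambda>x. if x \<in> A then f x else 0)"

lemma proj_on_id: "(\<And>x. f x \<noteq> 0 \<Longrightarrow> x \<in> A) \<Longrightarrow> proj_on A f = f"
  by (auto simp: proj_on_def fun_eq_iff)

lemma snd_restrict_rep: "wf_expr G a \<Longrightarrow> f \<in> W \<Longrightarrow> snd (restrict_rep G W) a f = evalop G a f"
  by (simp add: restrict_rep_def)

lemma evalop_outside_bpaths: "x \<notin> bpaths G \<Longrightarrow> evalop G a f x = 0"
  by (induction a arbitrary: f) (auto simp: opP_def opS_def opSs_def)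

lemma evalop_zero: "evalop G a (\<lambda>x. 0) = (\<lambda>x. 0)"
  by (induction a) (simp_all add: opP_def opS_def opSs_def)

lemma opS_proj_on:
  assumes "shift_saturated G X"
  shows "opS G e (proj_on X f) = proj_on X (opS G e f)"
  using assms by (auto simp: fun_eq_iff opS_def proj_on_def shift_saturated_def)

lemma opSs_proj_on:
  assumes wf: "wf_graph G" and X: "shift_saturated G X" and e: "e \<in> edges G"
  shows "opSs G e (proj_on X f) = proj_on X (opSs G e f)"
proof -
  have "cons_edge G e x \<in> X \<longleftrightarrow> x \<in> X" if "x \<in> bpaths G" "psrc G x = rng G e" for x
    using X cons_edge_in_bpaths[OF wf that(1) e that(2)] shift_cons_edge[OF that(2)]
    unfolding shift_saturated_def by metis
  then show ?thesis
    by (auto simp: fun_eq_iff opSs_def proj_on_def)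
qed

lemma evalop_proj_on:
  assumes "wf_graph G" "shift_saturated G X" "wf_expr G a"
  shows "evalop G a (proj_on X f) = proj_on X (evalop G a f)"
  using assms(3)
proof (induction a arbitrary: f)
  case (LP v)
  show ?case by (simp add: opP_def proj_on_def fun_eq_iff)
next
  case (LS e)
  show ?case using opS_proj_on[OF assms(2)] by simp
next
  case (LSs e)
  then show ?case using opSs_proj_on[OF assms(1,2)] by simp
next
  case (LMul a b)
  then show ?case by simp
qed (auto simp: proj_on_def fun_eq_iff)

lemma finite_support_evalop:
  assumes "finite {x. f x \<noteq> 0}"
  shows "finite {x. evalop G a f x \<noteq> 0}"
  using assms
proof (induction a arbitrary: f)
  case (LP v)
  then show ?case by (auto simp: opP_def elim: rev_finite_subset)
next
  case (LS e)
  have "{x. evalop G (LS e) f x \<noteq> 0} \<subseteq> cons_edge G e ` {x. f x \<noteq> 0}"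
    by (auto simp: opS_def image_iff intro: bpaths_first_edge_Some(4)[symmetric] split: if_splits)
  with LS show ?case by (auto elim: finite_subset)
next
  case (LSs e)
  have "{x. evalop G (LSs e) f x \<noteq> 0} \<subseteq> shift G ` {x. f x \<noteq> 0}"
    by (auto simp: opSs_def image_iff intro: shift_cons_edge[symmetric] split: if_splits)
  with LSs show ?case by (auto elim: finite_subset)
next
  case (LAdd a b)
  have "{x. evalop G (LAdd a b) f x \<noteq> 0} \<subseteq> {x. evalop G a f x \<noteq> 0} \<union> {x. evalop G b f x \<noteq> 0}"
    by auto
  with LAdd show ?case by (auto elim: finite_subset)
qed (auto elim: rev_finite_subset)

lemma support_evalop_subset:
  assumes "wf_graph G" "shift_saturated G X" "wf_expr G a" "\<And>x. f x \<noteq> 0 \<Longrightarrow> x \<in> X"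
  shows "evalop G a f x \<noteq> 0 \<Longrightarrow> x \<in> X"
proof -
  have "evalop G a f = proj_on X (evalop G a f)"
    using evalop_proj_on[OF assms(1-3), of f] proj_on_id[of f X] assms(4) by simp
  then show "evalop G a f x \<noteq> 0 \<Longrightarrow> x \<in> X"
    by (metis proj_on_def)
qed

lemma evalop_in_Vspan:
  assumes "wf_graph G" "shift_saturated G X" "wf_expr G a" "f \<in> Vspan X"
  shows "evalop G a f \<in> Vspan X"
  using assms(4) support_evalop_subset[OF assms(1-3), of f] finite_support_evalop[of f G a]
  by (auto simp: Vspan_def)

definition is_proj_expr :: "('v,'e) graph \<Rightarrow> ('v,'e,'k::field) lexpr \<Rightarrow> ('v,'e) path set \<Rightarrow> bool" where
  "is_proj_expr G a A \<longleftrightarrow> wf_expr G a \<and> (\<forall>f. evalop G a f = proj_on A f)"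

lemma is_proj_expr_LP:
  "v \<in> verts G \<Longrightarrow> is_proj_expr G (LP v) {x \<in> bpaths G. psrc G x = v}"
  by (simp add: is_proj_expr_def opP_def proj_on_def)

lemma opSs_shift:
  assumes "wf_graph G" "x \<in> bpaths G" "first_edge x = Some e"
  shows "opSs G e f (shift G x) = f x"
  using assms bpaths_first_edge_Some[OF assms(2,3)] shift_in_bpaths[OF assms(1,2)]
  by (simp add: opSs_def)

lemma opS_opSs:
  assumes "wf_graph G"
  shows "opS G e (opSs G e f) = proj_on {x \<in> bpaths G. first_edge x = Some e} f"
  using opSs_shift[OF assms] by (auto simp: fun_eq_iff opS_def proj_on_def)

lemma is_proj_expr_conj:
  assumes "wf_graph G" "is_proj_expr G a A" "e \<in> edges G"
  shows "is_proj_expr G (LMul (LS e) (LMul a (LSs e)))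
           {x \<in> bpaths G. first_edge x = Some e \<and> shift G x \<in> A}"
  using assms opSs_shift[OF assms(1)] by (auto simp: is_proj_expr_def fun_eq_iff opS_def proj_on_def)

fun range_proj_sum :: "'e list \<Rightarrow> ('v,'e,'k) lexpr" where
  "range_proj_sum [] = LZero"
| "range_proj_sum (e # es) = LAdd (LMul (LS e) (LSs e)) (range_proj_sum es)"

lemma evalop_range_proj_sum:
  assumes "wf_graph G"
  shows "distinct es \<Longrightarrow>
    evalop G (range_proj_sum es) f = proj_on {x \<in> bpaths G. first_edge x \<in> Some ` set es} f"
proof (induction es)
  case (Cons e es)
  then show ?case
    by (auto simp: opS_opSs[OF assms] proj_on_def fun_eq_iff)
qed (simp add: proj_on_def fun_eq_iff)

lemma wf_expr_range_proj_sum: "set es \<subseteq> edges G \<Longrightarrow> wf_expr G (range_proj_sum es)"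
  by (induction es) auto

lemma is_proj_expr_vertex_minus_edges:
  assumes wf: "wf_graph G" and "v \<in> verts G" "finite F" "F \<subseteq> emits G v"
  obtains a :: "('v,'e,'k::field) lexpr"
  where "is_proj_expr G a {x \<in> bpaths G. psrc G x = v \<and> first_edge x \<notin> Some ` F}"
proof -
  obtain es where es: "distinct es" "set es = F"
    using \<open>finite F\<close> finite_distinct_list by blast
  have "psrc G x = v" if "x \<in> bpaths G" "first_edge x = Some e" "e \<in> F" for x e
    using that \<open>F \<subseteq> emits G v\<close> bpaths_first_edge_Some(2) by (fastforce simp: emits_def)
  moreover have "wf_expr G (range_proj_sum es :: ('v,'e,'k) lexpr)"
    using es \<open>F \<subseteq> emits G v\<close> by (intro wf_expr_range_proj_sum) (auto simp: emits_def)
  ultimately have "is_proj_expr G (LAdd (LP v) (LScal (-1) (range_proj_sum es)) :: ('v,'e,'k) lexpr)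
      {x \<in> bpaths G. psrc G x = v \<and> first_edge x \<notin> Some ` F}"
    using assms es
    by (auto simp: is_proj_expr_def evalop_range_proj_sum[OF wf es(1)] opP_def proj_on_def
        fun_eq_iff emits_def)
  then show ?thesis by (rule that)
qed

lemma first_edge_funpow_shift_FinP:
  "first_edge ((shift G ^^ k) (FinP v es)) = (if k < length es then Some (es ! k) else None)"
proof (induction k arbitrary: v es)
  case (Suc k)
  then show ?case
    by (cases es) (simp_all add: funpow_Suc_right del: funpow.simps)
next
  case 0
  then show ?case by (cases es) auto
qed

lemma funpow_shift_InfP: "(shift G ^^ k) (InfP f) = InfP (\<lambda>n. f (n + k))"
  by (induction k) auto

lemma path_eqI:
  assumes "psrc G x = psrc G y"
    and "\<And>k. first_edge ((shift G ^^ k) x) = first_edge ((shift G ^^ k) y)"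
  shows "x = y"
proof (cases x; cases y)
  fix v es w ds
  assume xy: "x = FinP v es" "y = FinP w ds"
  have nth: "(if k < length es then Some (es ! k) else None) =
      (if k < length ds then Some (ds ! k) else None)" for k
    using assms(2)[of k] by (simp add: xy first_edge_funpow_shift_FinP)
  have "length es = length ds"
    using nth[of "length es"] nth[of "length ds"] by (auto split: if_splits)
  moreover have "es ! k = ds ! k" if "k < length es" for k
    using nth[of k] that \<open>length es = length ds\<close> by simp
  ultimately have "es = ds"
    by (simp add: nth_equalityI)
  with xy assms(1) show ?thesis by simp
next
  fix v es g
  assume "x = FinP v es" "y = InfP g"
  then show ?thesis
    using assms(2)[of "length es"] by (simp add: first_edge_funpow_shift_FinP funpow_shift_InfP)
next
  fix f w ds
  assume "x = InfP f" "y = FinP w ds"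
  then show ?thesis
    using assms(2)[of "length ds"] by (simp add: first_edge_funpow_shift_FinP funpow_shift_InfP)
next
  fix f g
  assume "x = InfP f" "y = InfP g"
  with assms(2) show ?thesis
    by (auto simp: funpow_shift_InfP fun_eq_iff)
qed

definition differ_at :: "('v,'e) graph \<Rightarrow> nat \<Rightarrow> ('v,'e) path \<Rightarrow> ('v,'e) path \<Rightarrow> bool" where
  "differ_at G k x y \<longleftrightarrow>
     psrc G ((shift G ^^ k) x) \<noteq> psrc G ((shift G ^^ k) y) \<or>
     first_edge ((shift G ^^ k) x) \<noteq> first_edge ((shift G ^^ k) y)"

lemma differ_at_Suc: "differ_at G (Suc k) x y \<longleftrightarrow> differ_at G k (shift G x) (shift G y)"
  by (simp add: differ_at_def funpow_Suc_right del: funpow.simps)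

lemma differ_at_bound:
  assumes "finite S" "\<alpha> \<notin> S"
  obtains n where "\<forall>x\<in>S. \<exists>k<n. differ_at G k x \<alpha>"
proof -
  have "\<exists>k. differ_at G k x \<alpha>" if "x \<in> S" for x
  proof (rule ccontr)
    assume "\<not> (\<exists>k. differ_at G k x \<alpha>)"
    then have "x = \<alpha>"
      by (intro path_eqI[of G]) (metis differ_at_def funpow_0)+
    with that assms(2) show False by simp
  qed
  then obtain k where k: "\<forall>x\<in>S. differ_at G (k x) x \<alpha>"
    by metis
  obtain n where "k ` S \<subseteq> {..<n}"
    using finite_nat_bounded[OF finite_imageI[OF assms(1)]] by blast
  with k show ?thesis
    using that by blast
qed

lemma exists_isolating_proj_expr_vertex_path:
  assumes wf: "wf_graph G" and v: "FinP v [] \<in> bpaths G"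
    and S: "finite S" "S \<subseteq> bpaths G" "FinP v [] \<notin> S"
  obtains a :: "('v,'e,'k::field) lexpr" and A
  where "is_proj_expr G a A" "FinP v [] \<in> A" "A \<inter> S = {}"
proof -
  define F where "F = {e. \<exists>x\<in>S. psrc G x = v \<and> first_edge x = Some e}"
  have "F \<subseteq> (\<lambda>x. the (first_edge x)) ` S"
    by (force simp: F_def)
  then have "finite F"
    using S(1) finite_surj by blast
  moreover have "F \<subseteq> emits G v"
    using S(2) bpaths_first_edge_Some(1,2) by (fastforce simp: F_def emits_def)
  moreover have "v \<in> verts G"
    using psrc_in_verts[OF wf v] by simp
  ultimately obtain a :: "('v,'e,'k) lexpr"
    where a: "is_proj_expr G a {x \<in> bpaths G. psrc G x = v \<and> first_edge x \<notin> Some ` F}"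
    using is_proj_expr_vertex_minus_edges[OF wf] by blast
  have notin: "x \<notin> S" if "x \<in> bpaths G" "psrc G x = v" "first_edge x \<notin> Some ` F" for x
  proof (cases "first_edge x")
    case None
    with that S(3) show ?thesis
      by (auto simp: first_edge_None_iff)
  next
    case (Some e)
    with that show ?thesis
      by (auto simp: F_def)
  qed
  show ?thesis
  proof (rule that[OF a])
    show "FinP v [] \<in> {x \<in> bpaths G. psrc G x = v \<and> first_edge x \<notin> Some ` F}"
      using v by simp
  qed (use notin in blast)
qed

lemma differ_at_bound_shift:
  assumes "S \<subseteq> bpaths G" "\<alpha> \<in> bpaths G" "first_edge \<alpha> = Some e"
    and "\<forall>x\<in>S. \<exists>k<Suc n. differ_at G k x \<alpha>"
  shows "\<forall>y\<in>shift G ` {x \<in> S. first_edge x = Some e}. \<exists>k<n. differ_at G k y (shift G \<alpha>)"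
proof (intro ballI, elim imageE)
  fix y x
  assume "y = shift G x" "x \<in> {x \<in> S. first_edge x = Some e}"
  then have x: "x \<in> bpaths G" "first_edge x = Some e" "y = shift G x" "x \<in> S"
    using assms(1) by auto
  obtain k where k: "k < Suc n" "differ_at G k x \<alpha>"
    using assms(4) x(4) by blast
  have "psrc G x = psrc G \<alpha>"
    using x(1,2) assms(2,3) bpaths_first_edge_Some(2) by metis
  then have "\<not> differ_at G 0 x \<alpha>"
    using x(2) assms(3) by (simp add: differ_at_def)
  with k(2) have "k \<noteq> 0"
    by metis
  with k x(3) show "\<exists>k<n. differ_at G k y (shift G \<alpha>)"
    by (cases k) (auto simp: differ_at_Suc)
qed

lemma is_proj_expr_subset_bpaths:
  assumes "is_proj_expr G a A"
  shows "A \<subseteq> bpaths G"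
proof
  fix x
  assume "x \<in> A"
  with assms have "evalop G a (\<lambda>_. 1) x = 1"
    by (simp add: is_proj_expr_def proj_on_def)
  then show "x \<in> bpaths G"
    by (metis evalop_outside_bpaths zero_neq_one)
qed

lemma exists_isolating_proj_expr_conj:
  fixes a :: "('v,'e,'k::field) lexpr"
  assumes wf: "wf_graph G" and \<alpha>: "\<alpha> \<in> bpaths G" "first_edge \<alpha> = Some e"
    and a: "is_proj_expr G a A" "shift G \<alpha> \<in> A" "A \<inter> shift G ` {x \<in> S. first_edge x = Some e} = {}"
  shows "\<exists>(a' :: ('v,'e,'k) lexpr) A'. is_proj_expr G a' A' \<and> \<alpha> \<in> A' \<and> A' \<inter> S = {}"
proof (intro exI conjI)
  show "is_proj_expr G (LMul (LS e) (LMul a (LSs e))) {x \<in> bpaths G. first_edge x = Some e \<and> shift G x \<in> A}"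
    using is_proj_expr_conj[OF wf a(1) bpaths_first_edge_Some(1)[OF \<alpha>]] .
  show "\<alpha> \<in> {x \<in> bpaths G. first_edge x = Some e \<and> shift G x \<in> A}"
    using \<alpha> a(2) by simp
  show "{x \<in> bpaths G. first_edge x = Some e \<and> shift G x \<in> A} \<inter> S = {}"
    using a(3) by blast
qed

text \<open>Induction on the depth at which the paths of \<open>S\<close> differ from \<open>\<alpha>\<close>: a common first
  edge \<open>e\<close> is peeled off by conjugating with \<open>s\<^sub>e\<close>.\<close>
lemma exists_isolating_proj_expr_depth:
  assumes wf: "wf_graph G"
  shows "\<alpha> \<in> bpaths G \<Longrightarrow> finite S \<Longrightarrow> S \<subseteq> bpaths G \<Longrightarrow> \<forall>x\<in>S. \<exists>k<n. differ_at G k x \<alpha> \<Longrightarrow>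
    \<exists>(a::('v,'e,'k::field) lexpr) A. is_proj_expr G a A \<and> \<alpha> \<in> A \<and> A \<inter> S = {}"
proof (induction n arbitrary: \<alpha> S)
  case 0
  then have "S = {}"
    by auto
  moreover have "is_proj_expr G (LP (psrc G \<alpha>) :: ('v,'e,'k) lexpr) {x \<in> bpaths G. psrc G x = psrc G \<alpha>}"
    by (rule is_proj_expr_LP[OF psrc_in_verts[OF wf 0(1)]])
  ultimately show ?case
    using 0(1) by blast
next
  case (Suc n)
  show ?case
  proof (cases "first_edge \<alpha>")
    case None
    then obtain v where "\<alpha> = FinP v []"
      by (auto simp: first_edge_None_iff)
    moreover have "\<alpha> \<notin> S"
      using Suc.prems(4) by (auto simp: differ_at_def)
    ultimately obtain a :: "('v,'e,'k) lexpr" and A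
      where "is_proj_expr G a A" "\<alpha> \<in> A" "A \<inter> S = {}"
      using exists_isolating_proj_expr_vertex_path[OF wf _ Suc.prems(2,3)] Suc.prems(1) by blast
    then show ?thesis
      by blast
  next
    case (Some e)
    define S' where "S' = shift G ` {x \<in> S. first_edge x = Some e}"
    have "\<forall>y\<in>S'. \<exists>k<n. differ_at G k y (shift G \<alpha>)"
      unfolding S'_def by (rule differ_at_bound_shift[OF Suc.prems(3,1) Some Suc.prems(4)])
    moreover have "finite S'"
      using Suc.prems(2) by (simp add: S'_def)
    moreover have "S' \<subseteq> bpaths G"
      using Suc.prems(3) shift_in_bpaths[OF wf] unfolding S'_def by blast
    ultimately obtain a :: "('v,'e,'k) lexpr" and A
      where a: "is_proj_expr G a A" "shift G \<alpha> \<in> A" "A \<inter> S' = {}"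
      using Suc.IH[OF shift_in_bpaths[OF wf Suc.prems(1)]] by meson
    then show ?thesis
      unfolding S'_def by (rule exists_isolating_proj_expr_conj[OF wf Suc.prems(1) Some])
  qed
qed

lemma exists_isolating_proj_expr:
  assumes "wf_graph G" "\<alpha> \<in> bpaths G" "finite S"
  obtains a :: "('v,'e,'k::field) lexpr" and A where "is_proj_expr G a A" "\<alpha> \<in> A" "A \<inter> S \<subseteq> {\<alpha>}"
proof -
  let ?S = "S \<inter> bpaths G - {\<alpha>}"
  have S: "finite ?S" "?S \<subseteq> bpaths G" "\<alpha> \<notin> ?S"
    using assms(3) by auto
  obtain n where "\<forall>x\<in>?S. \<exists>k<n. differ_at G k x \<alpha>"
    by (rule differ_at_bound[OF S(1,3)])
  then have "\<exists>(a::('v,'e,'k) lexpr) A. is_proj_expr G a A \<and> \<alpha> \<in> A \<and> A \<inter> ?S = {}"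
    by (rule exists_isolating_proj_expr_depth[OF assms(1,2) S(1,2)])
  then obtain a :: "('v,'e,'k) lexpr" and A where a: "is_proj_expr G a A" "\<alpha> \<in> A" "A \<inter> ?S = {}"
    by blast
  show ?thesis
  proof (rule that[OF a(1,2)])
    show "A \<inter> S \<subseteq> {\<alpha>}"
      using a(3) is_proj_expr_subset_bpaths[OF a(1)] by blast
  qed
qed

section \<open>The algebraic representation\<close>

lemma opSs_indicator:
  assumes "wf_graph G" "g \<in> bpaths G" "first_edge g = Some e"
  shows "opSs G e (indicator {g} :: _ \<Rightarrow> 'k::field) = indicator {shift G g}"
proof -
  have "cons_edge G e x = g \<longleftrightarrow> x = shift G g" if "psrc G x = rng G e" for x
    using that shift_cons_edge bpaths_first_edge_Some(4)[OF assms(2,3)] by metis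
  then show ?thesis
    using assms bpaths_first_edge_Some(3)[OF assms(2,3)] shift_in_bpaths[OF assms(1,2)]
    by (auto simp: fun_eq_iff opSs_def indicator_def)
qed

lemma opS_indicator:
  assumes "g \<in> bpaths G" "first_edge g = Some e"
  shows "opS G e (indicator {shift G g} :: _ \<Rightarrow> 'k::field) = indicator {g}"
proof -
  have "shift G x = shift G g \<longleftrightarrow> x = g" if "x \<in> bpaths G" "first_edge x = Some e" for x
    using that assms bpaths_first_edge_Some(4) by metis
  then show ?thesis
    using assms by (auto simp: fun_eq_iff opS_def indicator_def)
qed

lemma indicator_in_invariant_set_tclass:
  fixes W :: "(('v,'e) path \<Rightarrow> 'k::field) set"
  assumes wf: "wf_graph G" and inv: "\<And>a f. wf_expr G a \<Longrightarrow> f \<in> W \<Longrightarrow> evalop G a f \<in> W"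
    and b: "b \<in> bpaths G" "indicator {b} \<in> W" and g: "g \<in> tclass G b"
  shows "indicator {g} \<in> W"
proof -
  have shift_iff: "indicator {shift G x} \<in> W \<longleftrightarrow> indicator {x} \<in> W" if "x \<in> bpaths G" for x
  proof (cases "first_edge x")
    case None
    then show ?thesis
      by (auto simp: first_edge_None_iff)
  next
    case (Some e)
    have "e \<in> edges G"
      using bpaths_first_edge_Some(1)[OF that Some] .
    then have "indicator {x} \<in> W" if "indicator {shift G x} \<in> W"
      using inv[of "LS e" "indicator {shift G x}"] opS_indicator[where 'k='k, OF \<open>x \<in> bpaths G\<close> Some] that
        \<open>e \<in> edges G\<close>
      by simp
    moreover have "indicator {shift G x} \<in> W" if "indicator {x} \<in> W"
      using inv[of "LSs e" "indicator {x}"] opSs_indicator[where 'k='k, OF wf \<open>x \<in> bpaths G\<close> Some] that \<open>e \<in> edges G\<close>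
      by simp
    ultimately show ?thesis
      by blast
  qed
  have funpow_iff: "indicator {(shift G ^^ n) x} \<in> W \<longleftrightarrow> indicator {x} \<in> W" if "x \<in> bpaths G" for x n
    using that by (induction n) (simp_all add: shift_iff funpow_shift_in_bpaths[OF wf])
  obtain m n where "(shift G ^^ m) g = (shift G ^^ n) b" "g \<in> bpaths G"
    using g unfolding tclass_def shift_tail_def by blast
  then show ?thesis
    using funpow_iff b by metis
qed

lemma subspace_sum:
  assumes "is_subspace W" "finite F" "\<And>x. x \<in> F \<Longrightarrow> h x \<in> W"
  shows "(\<lambda>y. \<Sum>x\<in>F. h x y) \<in> W"
  using assms(2,3)
proof (induction F rule: finite_induct)
  case empty
  then show ?case
    using assms(1) by (simp add: is_subspace_def)
next
  case (insert x F)
  then show ?case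
    using assms(1) unfolding is_subspace_def by simp
qed

lemma Vspan_subset_subspace:
  fixes W :: "(('v,'e) path \<Rightarrow> 'k::field) set"
  assumes W: "is_subspace W" and X: "\<And>x. x \<in> X \<Longrightarrow> indicator {x} \<in> W"
  shows "Vspan X \<subseteq> W"
proof
  fix f :: "_ \<Rightarrow> 'k"
  assume "f \<in> Vspan X"
  then have f: "finite {x. f x \<noteq> 0}" "{x. f x \<noteq> 0} \<subseteq> X"
    by (auto simp: Vspan_def)
  have "(\<lambda>y. \<Sum>x\<in>{x. f x \<noteq> 0}. f x * indicator {x} y) \<in> W"
    using W f X by (intro subspace_sum) (auto simp: is_subspace_def)
  moreover have "(\<Sum>x\<in>{x. f x \<noteq> 0}. f x * indicator {x} y) = f y" for y
    using f(1) by (cases "f y = 0") (simp_all add: indicator_def if_distrib sum.delta)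
  ultimately show "f \<in> W"
    by simp
qed

lemma Vspan_tclass_subset_invariant_subspace:
  fixes W :: "(('v,'e) path \<Rightarrow> 'k::field) set"
  assumes wf: "wf_graph G" and W: "is_subspace W"
    and inv: "\<And>a f. wf_expr G a \<Longrightarrow> f \<in> W \<Longrightarrow> evalop G a f \<in> W"
    and b: "b \<in> tclass G \<alpha>" "indicator {b} \<in> W"
  shows "Vspan (tclass G \<alpha>) \<subseteq> W"
proof (rule Vspan_subset_subspace[OF W])
  have "b \<in> bpaths G" "tclass G b = tclass G \<alpha>"
    using b(1) tclass_subset_bpaths mem_tclass_iff by blast+
  then show "indicator {g} \<in> W" if "g \<in> tclass G \<alpha>" for g
    using indicator_in_invariant_set_tclass[OF wf inv _ b(2)] that by metis
qed

lemma indicator_in_subspace: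
  assumes "is_subspace W" "(\<lambda>x. c * indicator {b} x) \<in> W" "c \<noteq> 0"
  shows "indicator {b} \<in> W"
proof -
  have "(\<lambda>x. inverse c * (c * indicator {b} x)) \<in> W"
    using assms(1,2) by (simp add: is_subspace_def)
  then show ?thesis
    using assms(3) by (simp add: mult.assoc[symmetric])
qed

lemma fst_restrict_rep [simp]: "fst (restrict_rep G V) = V"
  by (simp add: restrict_rep_def)

lemma invariant_restrict_rep_iff:
  assumes "W \<subseteq> V"
  shows "invariant G (restrict_rep G V) W \<longleftrightarrow> (\<forall>a f. wf_expr G a \<longrightarrow> f \<in> W \<longrightarrow> evalop G a f \<in> W)"
proof -
  have "snd (restrict_rep G V) a f = evalop G a f" if "wf_expr G a" "f \<in> W" for a f
    using that assms by (auto intro: snd_restrict_rep)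
  then show ?thesis
    unfolding invariant_def by auto
qed

lemma Vspan_mono: "X \<subseteq> Y \<Longrightarrow> Vspan X \<subseteq> Vspan Y"
  by (auto simp: Vspan_def)

lemma indicator_in_Vspan_iff: "(indicator {b} :: _ \<Rightarrow> 'k::field) \<in> Vspan X \<longleftrightarrow> b \<in> X"
  by (simp add: Vspan_def indicator_def)

lemma invariant_rho_Vspan_tclass:
  assumes "wf_graph G"
  shows "invariant G (rho G :: ('v,'e,'k::field) rep) (Vspan (tclass G \<alpha>))"
  unfolding rho_def
  by (simp add: invariant_restrict_rep_iff Vspan_mono tclass_subset_bpaths
      evalop_in_Vspan[OF assms shift_saturated_tclass[OF assms]])

lemma proj_on_isolating:
  fixes f :: "('v,'e) path \<Rightarrow> 'k::field"
  assumes "b \<in> A" "A \<inter> {x. f x \<noteq> 0} \<subseteq> {b}"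
  shows "proj_on A f = (\<lambda>x. f b * indicator {b} x)"
proof
  fix x
  show "proj_on A f x = f b * indicator {b} x"
    using assms by (cases "x = b") (auto simp: proj_on_def)
qed

lemma irreducible_rho_cls:
  assumes wf: "wf_graph G"
  shows "irreducible_alg G (rho_cls G \<alpha> :: ('v,'e,'k::field) rep)"
  unfolding irreducible_alg_def
proof (intro allI impI)
  fix W :: "(_ \<Rightarrow> 'k) set"
  assume "W \<subseteq> fst (rho_cls G \<alpha>) \<and> is_subspace W \<and> invariant G (rho_cls G \<alpha>) W"
  then have WC: "W \<subseteq> Vspan (tclass G \<alpha>)" and W: "is_subspace W"
    and inv: "\<And>a f. wf_expr G a \<Longrightarrow> f \<in> W \<Longrightarrow> evalop G a f \<in> W"
    by (auto simp: rho_cls_def invariant_restrict_rep_iff)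
  show "W = {\<lambda>x. 0} \<or> W = fst (rho_cls G \<alpha>)"
  proof (cases "W \<subseteq> {\<lambda>x. 0}")
    case True
    then show ?thesis
      using W by (auto simp: is_subspace_def)
  next
    case False
    then obtain f b where f: "f \<in> W" "f b \<noteq> 0"
      by auto
    then have supp: "finite {x. f x \<noteq> 0}" "{x. f x \<noteq> 0} \<subseteq> tclass G \<alpha>"
      using WC by (auto simp: Vspan_def)
    then have b: "b \<in> tclass G \<alpha>"
      using f(2) by blast
    obtain a :: "('v,'e,'k) lexpr" and A
      where a: "is_proj_expr G a A" "b \<in> A" "A \<inter> {x. f x \<noteq> 0} \<subseteq> {b}"
      using exists_isolating_proj_expr[OF wf _ supp(1)] b tclass_subset_bpaths by blast
    have "evalop G a f = (\<lambda>x. f b * indicator {b} x)"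
      using proj_on_isolating[OF a(2,3)] a(1) by (simp add: is_proj_expr_def)
    moreover have "evalop G a f \<in> W"
      using a(1) by (intro inv[OF _ f(1)]) (simp add: is_proj_expr_def)
    ultimately have "indicator {b} \<in> W"
      using indicator_in_subspace[OF W _ f(2)] by simp
    then have "Vspan (tclass G \<alpha>) \<subseteq> W"
      using Vspan_tclass_subset_invariant_subspace[OF wf W inv b] by blast
    with WC show ?thesis
      by (simp add: rho_cls_def)
  qed
qed

lemma proj_on_indicator: "\<alpha> \<in> A \<Longrightarrow> proj_on A (indicator {\<alpha>}) = indicator {\<alpha>}"
  by (auto simp: proj_on_def indicator_def fun_eq_iff)

text \<open>\<open>T \<delta>\<^sub>\<alpha>\<close> is fixed by every projection expression fixing \<open>\<alpha>\<close>.\<close>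
lemma intertwiner_indicator_supported:
  fixes T :: "(('v,'e) path \<Rightarrow> 'k::field) \<Rightarrow> ('v,'e) path \<Rightarrow> 'k"
  assumes wf: "wf_graph G" and \<alpha>: "\<alpha> \<in> bpaths G"
    and T: "bij_betw T V W" and V: "indicator {\<alpha>} \<in> V"
    and W_inv: "\<And>a g. wf_expr G a \<Longrightarrow> g \<in> W \<Longrightarrow> evalop G a g \<in> W"
    and intertwines: "\<And>a f. wf_expr G a \<Longrightarrow> f \<in> V \<Longrightarrow> evalop G a f = inv_into V T (evalop G a (T f))"
    and "x \<noteq> \<alpha>"
  shows "T (indicator {\<alpha>}) x = 0"
proof -
  obtain a :: "('v,'e,'k) lexpr" and A where a: "is_proj_expr G a A" "\<alpha> \<in> A" "A \<inter> {x} \<subseteq> {\<alpha>}"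
    by (rule exists_isolating_proj_expr[OF wf \<alpha> finite.insertI[OF finite.emptyI]])
  then have a_wf: "wf_expr G a" and a_proj: "\<And>f. evalop G a f = proj_on A f"
    by (simp_all add: is_proj_expr_def)
  have "T (indicator {\<alpha>}) = T (inv_into V T (proj_on A (T (indicator {\<alpha>}))))"
    using intertwines[OF a_wf V] a(2) by (simp add: a_proj proj_on_indicator)
  also have "\<dots> = proj_on A (T (indicator {\<alpha>}))"
    using W_inv[OF a_wf bij_betw_apply[OF T V]] T by (simp add: a_proj bij_betw_def f_inv_into_f)
  finally have "T (indicator {\<alpha>}) x = proj_on A (T (indicator {\<alpha>})) x"
    by simp
  moreover have "x \<notin> A"
    using a(3) \<open>x \<noteq> \<alpha>\<close> by blast
  ultimately show ?thesis
    by (simp add: proj_on_def)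
qed

lemma not_alg_equivalent_restrict_rep:
  fixes V W :: "(('v,'e) path \<Rightarrow> 'k::field) set"
  assumes wf: "wf_graph G" and \<alpha>: "\<alpha> \<in> bpaths G"
    and V: "(\<lambda>x. 0) \<in> V" "indicator {\<alpha>} \<in> V"
    and W: "\<And>g. g \<in> W \<Longrightarrow> g \<alpha> = 0"
    and W_inv: "\<And>a g. wf_expr G a \<Longrightarrow> g \<in> W \<Longrightarrow> evalop G a g \<in> W"
  shows "\<not> alg_equivalent G (restrict_rep G V) (restrict_rep G W)"
proof
  assume "alg_equivalent G (restrict_rep G V) (restrict_rep G W)"
  then obtain T where T: "bij_betw T V W" "lin_on V T"
    and intertwines: "\<And>a f. wf_expr G a \<Longrightarrow> f \<in> V \<Longrightarrow> evalop G a f = inv_into V T (evalop G a (T f))"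
    unfolding alg_equivalent_def by (auto simp: snd_restrict_rep bij_betw_apply)
  have "T (indicator {\<alpha>}) x = 0" for x
  proof (cases "x = \<alpha>")
    case True
    then show ?thesis
      using W T(1) V(2) by (simp add: bij_betw_apply)
  qed (rule intertwiner_indicator_supported[OF wf \<alpha> T(1) V(2) W_inv intertwines])
  moreover have "T (\<lambda>x. 0) = (\<lambda>x. 0)"
  proof -
    have "T (\<lambda>x. c * f x) = (\<lambda>x. c * T f x)" if "f \<in> V" for c f
      using T(2) that unfolding lin_on_def by blast
    from this[OF V(1), of 0] show ?thesis
      by simp
  qed
  ultimately have "T (indicator {\<alpha>}) = T (\<lambda>x. 0)"
    by (simp add: fun_eq_iff)
  then have "indicator {\<alpha>} = (\<lambda>x. 0 :: 'k)"
    using T(1) V by (auto simp: bij_betw_def dest: inj_onD)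
  then show False
    by (metis indicator_simps(1) singletonI zero_neq_one)
qed

lemma alg_equivalent_restrict_rep_refl:
  assumes "\<And>a f. wf_expr G a \<Longrightarrow> f \<in> V \<Longrightarrow> evalop G a f \<in> V"
  shows "alg_equivalent G (restrict_rep G V) (restrict_rep G V)"
  unfolding alg_equivalent_def
  using assms by (intro exI[of _ id]) (auto simp: lin_on_def snd_restrict_rep)

lemma rho_cls_eq_iff:
  "(rho_cls G \<alpha> :: ('v,'e,'k::field) rep) = rho_cls G \<beta> \<longleftrightarrow> tclass G \<alpha> = tclass G \<beta>"
proof
  assume "(rho_cls G \<alpha> :: ('v,'e,'k::field) rep) = rho_cls G \<beta>"
  then have "(Vspan (tclass G \<alpha>) :: (_ \<Rightarrow> 'k) set) = Vspan (tclass G \<beta>)"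
    unfolding rho_cls_def by (metis fst_restrict_rep)
  then show "tclass G \<alpha> = tclass G \<beta>"
    using indicator_in_Vspan_iff[where 'k='k] by blast
qed (simp add: rho_cls_def)

lemma alg_equivalent_rho_cls_iff:
  assumes wf: "wf_graph G" and \<alpha>: "\<alpha> \<in> bpaths G"
  shows "alg_equivalent G (rho_cls G \<alpha> :: ('v,'e,'k::field) rep) (rho_cls G \<beta>)
    \<longleftrightarrow> tclass G \<alpha> = tclass G \<beta>"
proof
  assume equiv: "alg_equivalent G (rho_cls G \<alpha> :: ('v,'e,'k::field) rep) (rho_cls G \<beta>)"
  show "tclass G \<alpha> = tclass G \<beta>"
  proof (rule ccontr)
    assume "tclass G \<alpha> \<noteq> tclass G \<beta>"
    then have "\<alpha> \<notin> tclass G \<beta>"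
      using mem_tclass_iff[OF \<alpha>] by simp
    then have "\<not> alg_equivalent G (rho_cls G \<alpha> :: ('v,'e,'k) rep) (rho_cls G \<beta>)"
      unfolding rho_cls_def
    proof (intro not_alg_equivalent_restrict_rep[OF wf \<alpha>])
      show "indicator {\<alpha>} \<in> (Vspan (tclass G \<alpha>) :: (_ \<Rightarrow> 'k) set)"
        using self_in_tclass[OF \<alpha>] by (simp add: indicator_in_Vspan_iff)
      show "g \<alpha> = 0" if "g \<in> Vspan (tclass G \<beta>)" for g :: "_ \<Rightarrow> 'k"
        using that \<open>\<alpha> \<notin> tclass G \<beta>\<close> by (auto simp: Vspan_def)
      show "evalop G a g \<in> Vspan (tclass G \<beta>)"
        if "wf_expr G a" "g \<in> Vspan (tclass G \<beta>)" for a and g :: "_ \<Rightarrow> 'k"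
        using evalop_in_Vspan[OF wf shift_saturated_tclass[OF wf] that] .
    qed (simp add: Vspan_def)
    with equiv show False
      by contradiction
  qed
next
  assume "tclass G \<alpha> = tclass G \<beta>"
  then show "alg_equivalent G (rho_cls G \<alpha> :: ('v,'e,'k::field) rep) (rho_cls G \<beta>)"
    unfolding rho_cls_def
    by (metis alg_equivalent_restrict_rep_refl evalop_in_Vspan wf shift_saturated_tclass)
qed

lemma sum_tclasses_apply:
  assumes "finite N" "N \<subseteq> tclasses G" "\<And>c y. c \<in> N \<Longrightarrow> h c y \<noteq> 0 \<Longrightarrow> y \<in> c"
  shows "(\<Sum>c\<in>N. h c x) = (if x \<in> bpaths G \<and> tclass G x \<in> N then h (tclass G x) x else 0)"
proof (cases "x \<in> bpaths G")
  case True
  have "h c x = (if c = tclass G x then h c x else 0)" if "c \<in> N" for c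
  proof (cases "h c x = 0")
    case False
    then have "c = tclass G x"
      using mem_tclasses_iff[of c G x] assms(2) assms(3)[OF that] that True by blast
    then show ?thesis
      by simp
  qed auto
  then have "(\<Sum>c\<in>N. h c x) = (\<Sum>c\<in>N. if c = tclass G x then h c x else 0)"
    by (rule sum.cong[OF refl])
  also have "\<dots> = (if tclass G x \<in> N then h (tclass G x) x else 0)"
    using assms(1) by (simp add: sum.delta')
  finally show ?thesis
    using True by simp
next
  case False
  have "h c x = 0" if "c \<in> N" for c
    using False assms(3)[OF that] assms(2) that tclasses_subset_bpaths by blast
  then show ?thesis
    using False by simp
qed

definition tclass_components :: "('v,'e) graph \<Rightarrow> (('v,'e) path \<Rightarrow> 'k::zero) \<Rightarrow> ('v,'e) path set \<Rightarrow> ('v,'e) path \<Rightarrow> 'k" where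
  "tclass_components G f c = (if c \<in> tclasses G then proj_on c f else (\<lambda>x. 0))"

lemma tclass_components_eq_0_iff:
  assumes "x \<in> bpaths G"
  shows "tclass_components G f (tclass G x) = (\<lambda>x. 0) \<longleftrightarrow> (\<forall>y\<in>tclass G x. f y = 0)"
  using assms by (auto simp: tclass_components_def tclass_in_tclasses proj_on_def fun_eq_iff)

lemma finite_tclass_components_support:
  assumes "finite {x. f x \<noteq> 0}"
  shows "finite {c. tclass_components G f c \<noteq> (\<lambda>x. 0)}"
proof (rule finite_subset[OF _ finite_imageI[OF assms, of "tclass G"]])
  show "{c. tclass_components G f c \<noteq> (\<lambda>x. 0)} \<subseteq> tclass G ` {x. f x \<noteq> 0}"
    using mem_tclasses_iff tclasses_subset_bpaths
    by (fastforce simp: tclass_components_def proj_on_def fun_eq_iff split: if_splits)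
qed

lemma sum_tclass_components:
  assumes "finite N" "N \<subseteq> tclasses G" "\<And>x. f x \<noteq> 0 \<Longrightarrow> x \<in> bpaths G \<and> tclass G x \<in> N"
  shows "(\<Sum>c\<in>N. tclass_components G f c x) = f x"
proof -
  have "(\<Sum>c\<in>N. tclass_components G f c x) =
      (if x \<in> bpaths G \<and> tclass G x \<in> N then tclass_components G f (tclass G x) x else 0)"
    using assms(1,2) by (rule sum_tclasses_apply) (auto simp: tclass_components_def proj_on_def split: if_splits)
  also have "\<dots> = f x"
    using assms(3) self_in_tclass by (auto simp: tclass_components_def tclass_in_tclasses proj_on_def)
  finally show ?thesis .
qed

lemma alg_decomp_tclass_components:
  assumes "f \<in> Vspan (bpaths G)"
  shows "alg_decomp G f (tclass_components G f)"
  unfolding alg_decomp_def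
proof (intro conjI ballI)
  let ?N = "{c. tclass_components G f c \<noteq> (\<lambda>x. 0)}"
  have f: "finite {x. f x \<noteq> 0}" "{x. f x \<noteq> 0} \<subseteq> bpaths G"
    using assms by (auto simp: Vspan_def)
  show "finite ?N"
    using finite_tclass_components_support[OF f(1)] .
  show "?N \<subseteq> tclasses G"
    by (auto simp: tclass_components_def)
  show "tclass_components G f c \<in> Vspan c" if "c \<in> tclasses G" for c
    using that f(1) by (auto simp: tclass_components_def proj_on_def Vspan_def elim: rev_finite_subset)
  have supp: "x \<in> bpaths G \<and> tclass G x \<in> ?N" if "f x \<noteq> 0" for x
    using that f(2) tclass_components_eq_0_iff[of x G f] self_in_tclass by blast
  show "f = (\<lambda>x. \<Sum>c\<in>?N. tclass_components G f c x)"
    using sum_tclass_components[OF \<open>finite ?N\<close> \<open>?N \<subseteq> tclasses G\<close> supp] by (intro ext) (rule sym)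
qed

lemma alg_decomp_unique:
  assumes "alg_decomp G f g"
  shows "g = tclass_components G f"
proof (intro ext)
  fix c x
  let ?N = "{c. g c \<noteq> (\<lambda>x. 0)}"
  have N: "finite ?N" "?N \<subseteq> tclasses G" and g: "\<And>c. c \<in> tclasses G \<Longrightarrow> g c \<in> Vspan c"
    and f: "f = (\<lambda>x. \<Sum>c\<in>?N. g c x)"
    using assms by (auto simp: alg_decomp_def)
  have "(\<Sum>c\<in>?N. g c x) = (if x \<in> bpaths G \<and> tclass G x \<in> ?N then g (tclass G x) x else 0)"
    using N g by (intro sum_tclasses_apply) (auto simp: Vspan_def)
  then have fx: "f x = (if x \<in> bpaths G then g (tclass G x) x else 0)"
    using f by (auto simp: fun_eq_iff)
  have zero: "g c x = 0" if "c \<notin> tclasses G \<or> x \<notin> c"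
  proof (cases "c \<in> tclasses G")
    case True
    with that g[OF True] show ?thesis
      by (auto simp: Vspan_def)
  next
    case False
    with N(2) have "g c = (\<lambda>x. 0)"
      by blast
    then show ?thesis
      by simp
  qed
  show "g c x = tclass_components G f c x"
  proof (cases "c \<in> tclasses G \<and> x \<in> c")
    case True
    then have "x \<in> bpaths G" "c = tclass G x"
      using tclasses_subset_bpaths mem_tclasses_iff by blast+
    with True fx show ?thesis
      by (simp add: tclass_components_def proj_on_def)
  qed (use zero in \<open>auto simp: tclass_components_def proj_on_def\<close>)
qed

lemma alg_direct_sum_tclasses: "alg_direct_sum G TYPE('k::field)"
  unfolding alg_direct_sum_def
proof (intro conjI ballI allI impI)
  fix c
  assume "c \<in> tclasses G"
  then show "Vspan c \<subseteq> (Vspan (bpaths G) :: (_ \<Rightarrow> 'k) set)"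
    by (intro Vspan_mono tclasses_subset_bpaths)
next
  fix f :: "_ \<Rightarrow> 'k"
  assume "f \<in> Vspan (bpaths G)"
  then show "\<exists>!g. alg_decomp G f g"
    using alg_decomp_tclass_components alg_decomp_unique by (intro ex1I) auto
qed

lemma evalop_tclass_components:
  assumes "wf_graph G" "wf_expr G a"
  shows "evalop G a (tclass_components G f c) = tclass_components G (evalop G a f) c"
  by (simp add: tclass_components_def evalop_zero evalop_proj_on[OF assms(1) shift_saturated_tclasses[OF assms(1)] assms(2)])

lemma support_evalop_tclass_components:
  assumes "wf_graph G" "wf_expr G a" "evalop G a f x \<noteq> 0"
  shows "x \<in> bpaths G" "tclass_components G f (tclass G x) \<noteq> (\<lambda>x. 0)"
proof -
  show x: "x \<in> bpaths G"
    using assms(3) evalop_outside_bpaths by blast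
  have "tclass_components G (evalop G a f) (tclass G x) x \<noteq> 0"
    using assms(3) self_in_tclass[OF x] tclass_in_tclasses[OF x]
    by (simp add: tclass_components_def proj_on_def)
  then show "tclass_components G f (tclass G x) \<noteq> (\<lambda>x. 0)"
    by (metis evalop_tclass_components[OF assms(1,2)] evalop_zero)
qed

lemma alg_rep_direct_sum_tclasses:
  fixes G :: "('v,'e) graph"
  assumes wf: "wf_graph G"
  shows "alg_rep_direct_sum G TYPE('k::field)"
  unfolding alg_rep_direct_sum_def
proof (intro allI impI, elim conjE)
  fix a :: "('v,'e,'k) lexpr" and f :: "('v,'e) path \<Rightarrow> 'k" and g
  assume a: "wf_expr G a" and f: "f \<in> Vspan (bpaths G)" and "alg_decomp G f g"
  then have g: "g = tclass_components G f"
    using alg_decomp_unique by blast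
  let ?N = "{c. g c \<noteq> (\<lambda>x. 0)}"
  have N: "finite ?N" "?N \<subseteq> tclasses G"
    using alg_decomp_tclass_components[OF f] by (simp_all add: g alg_decomp_def)
  have supp: "x \<in> bpaths G \<and> tclass G x \<in> ?N" if "evalop G a f x \<noteq> 0" for x
    using support_evalop_tclass_components[OF wf a that] by (simp add: g)
  have "evalop G a f = (\<lambda>x. \<Sum>c\<in>?N. tclass_components G (evalop G a f) c x)"
    using sum_tclass_components[OF N supp] by (intro ext) (rule sym)
  also have "\<dots> = (\<lambda>x. \<Sum>c\<in>?N. snd (restrict_rep G (Vspan c)) a (g c) x)"
    using alg_decomp_tclass_components[OF f] N(2)
    by (intro ext sum.cong refl)
       (auto simp: g evalop_tclass_components[OF wf a] snd_restrict_rep[OF a] alg_decomp_def)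
  finally show "snd (rho G) a f = (\<lambda>x. \<Sum>c\<in>?N. snd (restrict_rep G (Vspan c)) a (g c) x)"
    using f by (simp add: rho_def snd_restrict_rep[OF a])
qed

section \<open>Square-summable functions\<close>

definition square_summable :: "('a \<Rightarrow> complex) \<Rightarrow> bool" where
  "square_summable f \<longleftrightarrow> (\<lambda>x. (cmod (f x))\<^sup>2) summable_on UNIV"

lemma ell2_iff: "f \<in> ell2 X \<longleftrightarrow> (\<forall>x. x \<notin> X \<longrightarrow> f x = 0) \<and> square_summable f"
  by (simp add: ell2_def square_summable_def)

lemma square_summable_le:
  assumes "square_summable f" "\<And>x. cmod (g x) \<le> cmod (f x)"
  shows "square_summable g"
  unfolding square_summable_def
  by (rule summable_on_comparison_test[OF assms(1)[unfolded square_summable_def]])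
     (use assms(2) in \<open>auto intro: power_mono\<close>)

lemma square_summable_add:
  assumes "square_summable f" "square_summable g"
  shows "square_summable (\<lambda>x. f x + g x)"
proof -
  have "(\<lambda>x. 2 * (cmod (f x))\<^sup>2 + 2 * (cmod (g x))\<^sup>2) summable_on UNIV"
    using assms unfolding square_summable_def by (intro summable_on_add summable_on_cmult_right)
  moreover have "(cmod (f x + g x))\<^sup>2 \<le> 2 * (cmod (f x))\<^sup>2 + 2 * (cmod (g x))\<^sup>2" for x
  proof -
    have "(cmod (f x + g x))\<^sup>2 \<le> (cmod (f x) + cmod (g x))\<^sup>2"
      by (simp add: norm_triangle_ineq power_mono)
    also have "\<dots> \<le> 2 * (cmod (f x))\<^sup>2 + 2 * (cmod (g x))\<^sup>2"
      using sum_squares_bound[of "cmod (f x)" "cmod (g x)"] by (simp add: power2_eq_square algebra_simps)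
    finally show ?thesis .
  qed
  ultimately show ?thesis
    unfolding square_summable_def by (rule summable_on_comparison_test) auto
qed

lemma square_summable_scale: "square_summable f \<Longrightarrow> square_summable (\<lambda>x. c * f x)"
  unfolding square_summable_def by (simp add: norm_mult power_mult_distrib summable_on_cmult_right)

lemma square_summable_diff:
  "square_summable f \<Longrightarrow> square_summable g \<Longrightarrow> square_summable (\<lambda>x. f x - g x)"
  using square_summable_add[of f "\<lambda>x. (-1) * g x"] square_summable_scale[of g "-1"] by simp

lemma square_summable_sum:
  "finite F \<Longrightarrow> (\<And>c. c \<in> F \<Longrightarrow> square_summable (g c)) \<Longrightarrow> square_summable (\<lambda>x. \<Sum>c\<in>F. g c x)"
proof (induction F rule: finite_induct)
  case empty
  then show ?case
    by (simp add: square_summable_def)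
next
  case (insert c F)
  then show ?case
    using square_summable_add[of "g c" "\<lambda>x. \<Sum>c\<in>F. g c x"] by simp
qed

lemma square_summable_finite_support:
  assumes "finite {x. f x \<noteq> 0}"
  shows "square_summable f"
proof -
  have "(\<lambda>x. (cmod (f x))\<^sup>2) summable_on {x. f x \<noteq> 0}"
    using assms by simp
  then show ?thesis
    unfolding square_summable_def by (rule summable_on_cong_neutral[THEN iffD1, rotated -1]) auto
qed

lemma square_summable_reindex:
  assumes "square_summable f" "inj_on h D"
    and "\<And>x. x \<notin> D \<Longrightarrow> g x = 0" "\<And>x. x \<in> D \<Longrightarrow> g x = f (h x)"
  shows "square_summable g"
proof -
  have "(\<lambda>x. (cmod (f x))\<^sup>2) summable_on h ` D"
    using assms(1) unfolding square_summable_def by (rule summable_on_subset_banach) simp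
  then have "((\<lambda>x. (cmod (f x))\<^sup>2) \<circ> h) summable_on D"
    using summable_on_reindex[OF assms(2)] by blast
  then have "(\<lambda>x. (cmod (g x))\<^sup>2) summable_on D"
    by (rule summable_on_cong[THEN iffD1, rotated]) (simp add: assms(4))
  then show ?thesis
    unfolding square_summable_def
    by (rule summable_on_cong_neutral[THEN iffD1, rotated -1]) (auto simp: assms(3))
qed

lemma square_summable_evalop:
  assumes "square_summable f"
  shows "square_summable (evalop G a f)"
  using assms
proof (induction a arbitrary: f)
  case (LP v)
  then show ?case
    by (rule square_summable_le) (simp add: opP_def)
next
  case (LS e)
  have "inj_on (shift G) {x \<in> bpaths G. first_edge x = Some e}"
    by (rule inj_onI) (metis (mono_tags, lifting) bpaths_first_edge_Some(4) mem_Collect_eq)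
  with LS show ?case
    by (rule square_summable_reindex) (auto simp: opS_def)
next
  case (LSs e)
  have "inj_on (cons_edge G e) {x \<in> bpaths G. psrc G x = rng G e}"
    by (rule inj_on_inverseI[where g = "shift G"]) (simp add: shift_cons_edge)
  with LSs show ?case
    by (rule square_summable_reindex) (auto simp: opSs_def)
next
  case LZero
  then show ?case
    by (simp add: square_summable_def)
next
  case (LScal c a)
  show ?case
    using square_summable_scale[OF LScal.IH[OF LScal.prems]] by simp
next
  case (LAdd a b)
  show ?case
    using square_summable_add[OF LAdd.IH(1)[OF LAdd.prems] LAdd.IH(2)[OF LAdd.prems]] by simp
next
  case (LMul a b)
  show ?case
    using LMul.IH(1)[OF LMul.IH(2)[OF LMul.prems]] by simp
qed

lemma evalop_in_ell2:
  assumes "wf_graph G" "shift_saturated G X" "wf_expr G a" "f \<in> ell2 X"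
  shows "evalop G a f \<in> ell2 X"
proof -
  have f: "\<And>x. f x \<noteq> 0 \<Longrightarrow> x \<in> X" "square_summable f"
    using assms(4) by (auto simp: ell2_iff)
  show ?thesis
    using support_evalop_subset[OF assms(1-3) f(1)] square_summable_evalop[OF f(2)]
    by (auto simp: ell2_iff)
qed

lemma abs_le_l2norm:
  assumes "square_summable f"
  shows "cmod (f x) \<le> l2norm f"
proof -
  have "infsum (\<lambda>x. (cmod (f x))\<^sup>2) {x} \<le> infsum (\<lambda>x. (cmod (f x))\<^sup>2) UNIV"
    using assms by (intro infsum_mono2) (auto simp: square_summable_def)
  then have "(cmod (f x))\<^sup>2 \<le> infsum (\<lambda>x. (cmod (f x))\<^sup>2) UNIV"
    by simp
  then show ?thesis
    unfolding l2norm_def by (rule real_le_rsqrt)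
qed

lemma l2norm_nonneg: "0 \<le> l2norm f"
  by (simp add: l2norm_def infsum_nonneg)

lemma l2norm_small_off_finite:
  assumes f: "square_summable f" and "\<epsilon> > 0"
  obtains F where "finite F"
    "\<And>d. (\<And>x. x \<in> F \<Longrightarrow> d x = 0) \<Longrightarrow> (\<And>x. cmod (d x) \<le> cmod (f x)) \<Longrightarrow> l2norm d < \<epsilon>"
proof -
  let ?g = "\<lambda>x. (cmod (f x))\<^sup>2"
  obtain F where F: "finite F" "dist (sum ?g F) (infsum ?g UNIV) \<le> \<epsilon>\<^sup>2 / 2"
    using infsum_finite_approximation[of ?g UNIV "\<epsilon>\<^sup>2 / 2"] f \<open>\<epsilon> > 0\<close>
    by (auto simp: square_summable_def)
  have summable: "?g summable_on (- F)"
    using f unfolding square_summable_def by (rule summable_on_subset_banach) simp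
  have "infsum ?g UNIV = infsum ?g (F \<union> - F)"
    by simp
  also have "\<dots> = sum ?g F + infsum ?g (- F)"
    using F(1) summable by (subst infsum_Un_disjoint) auto
  finally have tail: "infsum ?g (- F) \<le> \<epsilon>\<^sup>2 / 2"
    using F(2) by (simp add: dist_real_def)
  have "l2norm d < \<epsilon>" if d: "\<And>x. x \<in> F \<Longrightarrow> d x = 0" "\<And>x. cmod (d x) \<le> cmod (f x)" for d
  proof -
    have "infsum (\<lambda>x. (cmod (d x))\<^sup>2) UNIV \<le> infsum ?g (- F)"
    proof (rule infsum_mono_neutral)
      show "(\<lambda>x. (cmod (d x))\<^sup>2) summable_on UNIV"
        using square_summable_le[OF f d(2)] by (simp add: square_summable_def)
    qed (use summable d in \<open>auto intro: power_mono\<close>)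
    then have "l2norm d \<le> sqrt (\<epsilon>\<^sup>2 / 2)"
      unfolding l2norm_def using tail by simp
    also have "\<dots> < sqrt (\<epsilon>\<^sup>2)"
      using \<open>\<epsilon> > 0\<close> by (intro real_sqrt_less_mono) simp
    also have "\<dots> = \<epsilon>"
      using \<open>\<epsilon> > 0\<close> by simp
    finally show ?thesis .
  qed
  with F(1) show ?thesis
    using that by blast
qed

lemma l2_approximating_finite_sets:
  assumes "square_summable f"
  obtains Fs where "\<And>n. finite (Fs n)"
    "\<And>d. (\<And>n x. x \<in> Fs n \<Longrightarrow> d n x = 0) \<Longrightarrow> (\<And>n x. cmod (d n x) \<le> cmod (f x)) \<Longrightarrow>
       (\<lambda>n. l2norm (d n)) \<longlonglongrightarrow> 0"
proof -
  have "\<forall>n. \<exists>F. finite F \<and> (\<forall>d. (\<forall>x\<in>F. d x = 0) \<longrightarrow> (\<forall>x. cmod (d x) \<le> cmod (f x)) \<longrightarrow>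
      l2norm d < inverse (real (Suc n)))"
    by (metis l2norm_small_off_finite[OF assms] inverse_positive_iff_positive of_nat_0_less_iff zero_less_Suc)
  then obtain Fs where Fs: "\<And>n. finite (Fs n)"
    "\<And>n d. (\<forall>x\<in>Fs n. d x = 0) \<Longrightarrow> (\<forall>x. cmod (d x) \<le> cmod (f x)) \<Longrightarrow> l2norm d < inverse (real (Suc n))"
    by metis
  have "(\<lambda>n. l2norm (d n)) \<longlonglongrightarrow> 0"
    if "\<And>n x. x \<in> Fs n \<Longrightarrow> d n x = 0" "\<And>n x. cmod (d n x) \<le> cmod (f x)" for d
  proof (rule Lim_null_comparison[OF _ LIMSEQ_inverse_real_of_nat])
    have "norm (l2norm (d n)) \<le> inverse (real (Suc n))" for n
      using Fs(2)[of n "d n"] that l2norm_nonneg[of "d n"] by simp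
    then show "\<forall>\<^sub>F n in sequentially. norm (l2norm (d n)) \<le> inverse (real (Suc n))"
      by simp
  qed
  with Fs(1) show ?thesis
    using that by blast
qed

section \<open>The Hilbert space representation\<close>

lemma l2closedD:
  assumes "l2closed W" "\<And>n. u n \<in> W" "f \<in> ell2 UNIV" "(\<lambda>n. l2norm (\<lambda>x. u n x - f x)) \<longlonglongrightarrow> 0"
  shows "f \<in> W"
  using assms unfolding l2closed_def by blast

lemma l2closed_ell2: "l2closed (ell2 X)"
  unfolding l2closed_def
proof (intro allI impI, elim conjE)
  fix u :: "nat \<Rightarrow> _" and f
  assume u: "\<forall>n. u n \<in> ell2 X" and f: "f \<in> ell2 UNIV"
    and lim: "(\<lambda>n. l2norm (\<lambda>x. u n x - f x)) \<longlonglongrightarrow> 0"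
  have "f x = 0" if "x \<notin> X" for x
  proof -
    have "cmod (f x) \<le> l2norm (\<lambda>y. u n y - f y)" for n
      using abs_le_l2norm[OF square_summable_diff, of "u n" f x] u f that by (simp add: ell2_iff)
    then have "cmod (f x) \<le> 0"
      using lim by (intro LIMSEQ_le_const[of _ 0]) auto
    then show ?thesis
      by simp
  qed
  with f show "f \<in> ell2 X"
    by (simp add: ell2_iff)
qed

lemma indicator_in_ell2_iff: "indicator {b} \<in> ell2 X \<longleftrightarrow> b \<in> X"
  using square_summable_finite_support[of "indicator {b}"] by (auto simp: ell2_iff indicator_def)

lemma ell2_subset_closed_subspace:
  assumes "l2closed W" "Vspan X \<subseteq> W"
  shows "ell2 X \<subseteq> W"
proof
  fix g
  assume "g \<in> ell2 X"
  then have g: "\<And>x. x \<notin> X \<Longrightarrow> g x = 0" "square_summable g"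
    by (auto simp: ell2_iff)
  obtain Fs where Fs: "\<And>n. finite (Fs n)"
    "\<And>d. (\<And>n x. x \<in> Fs n \<Longrightarrow> d n x = 0) \<Longrightarrow> (\<And>n x. cmod (d n x) \<le> cmod (g x)) \<Longrightarrow>
       (\<lambda>n. l2norm (d n)) \<longlonglongrightarrow> 0"
    using l2_approximating_finite_sets[OF g(2)] by blast
  have "proj_on (Fs n) g \<in> Vspan X" for n
    using Fs(1)[of n] g(1) by (auto simp: Vspan_def proj_on_def elim: rev_finite_subset)
  then show "g \<in> W"
  proof (rule l2closedD[OF assms(1) subsetD[OF assms(2)]])
    show "g \<in> ell2 UNIV"
      using g(2) by (simp add: ell2_iff)
    show "(\<lambda>n. l2norm (\<lambda>x. proj_on (Fs n) g x - g x)) \<longlonglongrightarrow> 0"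
      by (rule Fs(2)) (auto simp: proj_on_def)
  qed
qed

text \<open>Projections isolating \<open>b\<close> from larger and larger finite sets map \<open>f\<close> to a sequence
  converging to \<open>f b \<delta>\<^sub>b\<close> in \<open>\<ell>\<^sup>2\<close>.\<close>
lemma indicator_in_closed_invariant_subspace:
  fixes G :: "('v,'e) graph"
  assumes wf: "wf_graph G" and W: "is_subspace W" "l2closed W"
    and inv: "\<And>a f. wf_expr G a \<Longrightarrow> f \<in> W \<Longrightarrow> evalop G a f \<in> W"
    and f: "f \<in> W" "f \<in> ell2 (bpaths G)" "f b \<noteq> 0"
  shows "indicator {b} \<in> W"
proof -
  have b: "b \<in> bpaths G" and sf: "square_summable f"
    using f(2,3) by (auto simp: ell2_iff)
  obtain Fs where Fs: "\<And>n. finite (Fs n)"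
    "\<And>d. (\<And>n x. x \<in> Fs n \<Longrightarrow> d n x = 0) \<Longrightarrow> (\<And>n x. cmod (d n x) \<le> cmod (f x)) \<Longrightarrow>
       (\<lambda>n. l2norm (d n)) \<longlonglongrightarrow> 0"
    using l2_approximating_finite_sets[OF sf] by blast
  have "\<exists>(a::('v,'e,complex) lexpr) A. is_proj_expr G a A \<and> b \<in> A \<and> A \<inter> Fs n \<subseteq> {b}" for n
    using exists_isolating_proj_expr[OF wf b Fs(1)] by metis
  then obtain as As where as: "\<And>n. is_proj_expr G (as n :: ('v,'e,complex) lexpr) (As n)"
    "\<And>n. b \<in> As n" "\<And>n. As n \<inter> Fs n \<subseteq> {b}"
    by metis
  define t where "t = (\<lambda>x. f b * indicator {b} x)"
  have "proj_on (As n) f \<in> W" for n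
    using inv[OF _ f(1), of "as n"] as(1)[of n] by (simp add: is_proj_expr_def)
  moreover have "t \<in> ell2 UNIV"
    using square_summable_finite_support[of t] by (simp add: ell2_iff t_def indicator_def)
  moreover have "(\<lambda>n. l2norm (\<lambda>x. proj_on (As n) f x - t x)) \<longlonglongrightarrow> 0"
  proof (rule Fs(2))
    show "proj_on (As n) f x - t x = 0" if "x \<in> Fs n" for n x
      using that as(2,3)[of n] by (auto simp: proj_on_def t_def indicator_def)
    show "cmod (proj_on (As n) f x - t x) \<le> cmod (f x)" for n x
      using as(2)[of n] by (auto simp: proj_on_def t_def indicator_def)
  qed
  ultimately have "t \<in> W"
    by (rule l2closedD[OF W(2)])
  then show ?thesis
    unfolding t_def by (rule indicator_in_subspace[OF W(1) _ f(3)])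
qed

lemma ell2_mono: "X \<subseteq> Y \<Longrightarrow> ell2 X \<subseteq> ell2 Y"
  by (auto simp: ell2_def)

lemma invariant_piE_ell2_tclass:
  assumes "wf_graph G"
  shows "invariant G (piE G) (ell2 (tclass G \<alpha>))"
  unfolding piE_def
  by (simp add: invariant_restrict_rep_iff ell2_mono tclass_subset_bpaths
      evalop_in_ell2[OF assms shift_saturated_tclass[OF assms]])

lemma irreducible_pi_cls:
  assumes wf: "wf_graph G"
  shows "irreducible_hil G (pi_cls G \<alpha>)"
  unfolding irreducible_hil_def
proof (intro allI impI)
  fix W :: "(_ \<Rightarrow> complex) set"
  assume "W \<subseteq> fst (pi_cls G \<alpha>) \<and> is_subspace W \<and> l2closed W \<and> invariant G (pi_cls G \<alpha>) W"
  then have WC: "W \<subseteq> ell2 (tclass G \<alpha>)" and W: "is_subspace W" "l2closed W"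
    and inv: "\<And>a f. wf_expr G a \<Longrightarrow> f \<in> W \<Longrightarrow> evalop G a f \<in> W"
    by (auto simp: pi_cls_def invariant_restrict_rep_iff)
  show "W = {\<lambda>x. 0} \<or> W = fst (pi_cls G \<alpha>)"
  proof (cases "W \<subseteq> {\<lambda>x. 0}")
    case True
    then show ?thesis
      using W by (auto simp: is_subspace_def)
  next
    case False
    then obtain f b where f: "f \<in> W" "f b \<noteq> 0"
      by auto
    have "f \<in> ell2 (tclass G \<alpha>)"
      using f(1) WC by blast
    then have "f \<in> ell2 (bpaths G)" "b \<in> tclass G \<alpha>"
      using f(2) tclass_subset_bpaths by (auto simp: ell2_iff)
    then have "Vspan (tclass G \<alpha>) \<subseteq> W"
      using indicator_in_closed_invariant_subspace[OF wf W inv f(1) _ f(2)]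
        Vspan_tclass_subset_invariant_subspace[OF wf W(1) inv] by blast
    then have "ell2 (tclass G \<alpha>) \<subseteq> W"
      by (rule ell2_subset_closed_subspace[OF W(2)])
    with WC show ?thesis
      by (simp add: pi_cls_def)
  qed
qed

lemma unitarily_equivalent_imp_alg_equivalent:
  "unitarily_equivalent G R1 R2 \<Longrightarrow> alg_equivalent G R1 R2"
  by (auto simp: unitarily_equivalent_def alg_equivalent_def)

lemma unitarily_equivalent_restrict_rep_refl:
  assumes "\<And>a f. wf_expr G a \<Longrightarrow> f \<in> V \<Longrightarrow> evalop G a f \<in> V"
  shows "unitarily_equivalent G (restrict_rep G V) (restrict_rep G V)"
  unfolding unitarily_equivalent_def
  using assms by (intro exI[of _ id]) (auto simp: lin_on_def snd_restrict_rep)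

lemma pi_cls_eq_iff: "pi_cls G \<alpha> = pi_cls G \<beta> \<longleftrightarrow> tclass G \<alpha> = tclass G \<beta>"
proof
  assume "pi_cls G \<alpha> = pi_cls G \<beta>"
  then have "ell2 (tclass G \<alpha>) = ell2 (tclass G \<beta>)"
    unfolding pi_cls_def by (metis fst_restrict_rep)
  then show "tclass G \<alpha> = tclass G \<beta>"
    using indicator_in_ell2_iff by blast
qed (simp add: pi_cls_def)

lemma unitarily_equivalent_pi_cls_iff:
  assumes wf: "wf_graph G" and \<alpha>: "\<alpha> \<in> bpaths G"
  shows "unitarily_equivalent G (pi_cls G \<alpha>) (pi_cls G \<beta>) \<longleftrightarrow> tclass G \<alpha> = tclass G \<beta>"
proof
  assume equiv: "unitarily_equivalent G (pi_cls G \<alpha>) (pi_cls G \<beta>)"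
  show "tclass G \<alpha> = tclass G \<beta>"
  proof (rule ccontr)
    assume "tclass G \<alpha> \<noteq> tclass G \<beta>"
    then have "\<alpha> \<notin> tclass G \<beta>"
      using mem_tclass_iff[OF \<alpha>] by simp
    then have "\<not> alg_equivalent G (pi_cls G \<alpha>) (pi_cls G \<beta>)"
      unfolding pi_cls_def
    proof (intro not_alg_equivalent_restrict_rep[OF wf \<alpha>])
      show "(\<lambda>x. 0) \<in> ell2 (tclass G \<alpha>)"
        using square_summable_finite_support[of "\<lambda>x. 0"] by (simp add: ell2_iff)
      show "indicator {\<alpha>} \<in> ell2 (tclass G \<alpha>)"
        using self_in_tclass[OF \<alpha>] by (simp add: indicator_in_ell2_iff)
      show "g \<alpha> = 0" if "g \<in> ell2 (tclass G \<beta>)" for g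
        using that \<open>\<alpha> \<notin> tclass G \<beta>\<close> by (simp add: ell2_iff)
      show "evalop G a g \<in> ell2 (tclass G \<beta>)" if "wf_expr G a" "g \<in> ell2 (tclass G \<beta>)" for a g
        using evalop_in_ell2[OF wf shift_saturated_tclass[OF wf] that] .
    qed
    with equiv show False
      using unitarily_equivalent_imp_alg_equivalent by blast
  qed
next
  assume "tclass G \<alpha> = tclass G \<beta>"
  then show "unitarily_equivalent G (pi_cls G \<alpha>) (pi_cls G \<beta>)"
    unfolding pi_cls_def
    by (metis unitarily_equivalent_restrict_rep_refl evalop_in_ell2 wf shift_saturated_tclass)
qed

lemma l2_has_sum_cong:
  assumes "\<And>c. c \<in> C \<Longrightarrow> g c = g' c" "l2_has_sum g C f"
  shows "l2_has_sum g' C f"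
proof -
  have "(\<Sum>c\<in>F. g' c x) = (\<Sum>c\<in>F. g c x)" if "F \<subseteq> C" for F x
    using that assms(1) by (intro sum.cong) auto
  with assms(2) show ?thesis
    unfolding l2_has_sum_def by simp
qed

lemma l2_has_sum_proj_tclasses:
  assumes "f \<in> ell2 (bpaths G)"
  shows "l2_has_sum (\<lambda>c. proj_on c f) (tclasses G) f"
  unfolding l2_has_sum_def
proof (intro allI impI)
  fix \<epsilon> :: real
  assume "\<epsilon> > 0"
  have f: "\<And>x. x \<notin> bpaths G \<Longrightarrow> f x = 0" "square_summable f"
    using assms by (auto simp: ell2_iff)
  obtain Fp where Fp: "finite Fp"
    "\<And>d. (\<And>x. x \<in> Fp \<Longrightarrow> d x = 0) \<Longrightarrow> (\<And>x. cmod (d x) \<le> cmod (f x)) \<Longrightarrow> l2norm d < \<epsilon>"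
    using l2norm_small_off_finite[OF f(2) \<open>\<epsilon> > 0\<close>] by blast
  define F0 where "F0 = tclass G ` (Fp \<inter> bpaths G)"
  have "l2norm (\<lambda>x. f x - (\<Sum>c\<in>F. proj_on c f x)) < \<epsilon>"
    if F: "finite F" "F0 \<subseteq> F" "F \<subseteq> tclasses G" for F
  proof (rule Fp(2))
    have d: "f x - (\<Sum>c\<in>F. proj_on c f x) = (if x \<in> bpaths G \<and> tclass G x \<in> F then 0 else f x)" for x
      using sum_tclasses_apply[OF F(1,3), where h="\<lambda>c. proj_on c f" and x=x] self_in_tclass[of x G]
      by (auto simp: proj_on_def split: if_splits)
    then show "f x - (\<Sum>c\<in>F. proj_on c f x) = 0" if "x \<in> Fp" for x
      using that f(1) F(2) by (auto simp: F0_def)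
    show "cmod (f x - (\<Sum>c\<in>F. proj_on c f x)) \<le> cmod (f x)" for x
      using d[of x] by simp
  qed
  moreover have "finite F0" "F0 \<subseteq> tclasses G"
    using Fp(1) by (auto simp: F0_def tclasses_def)
  ultimately show "\<exists>F0. finite F0 \<and> F0 \<subseteq> tclasses G \<and> (\<forall>F. finite F \<and> F0 \<subseteq> F \<and> F \<subseteq> tclasses G \<longrightarrow>
      l2norm (\<lambda>x. f x - (\<Sum>c\<in>F. proj_on c f x)) < \<epsilon>)"
    by (intro exI[of _ F0]) blast
qed

lemma l2_has_sum_pointwise:
  assumes "l2_has_sum g C f" "square_summable f" "\<And>c. c \<in> C \<Longrightarrow> square_summable (g c)" "\<epsilon> > 0"
  obtains F0 where "finite F0" "F0 \<subseteq> C"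
    "\<And>F. finite F \<Longrightarrow> F0 \<subseteq> F \<Longrightarrow> F \<subseteq> C \<Longrightarrow> cmod (f x - (\<Sum>c\<in>F. g c x)) < \<epsilon>"
proof -
  obtain F0 where F0: "finite F0" "F0 \<subseteq> C"
    "\<And>F. finite F \<and> F0 \<subseteq> F \<and> F \<subseteq> C \<Longrightarrow> l2norm (\<lambda>x. f x - (\<Sum>c\<in>F. g c x)) < \<epsilon>"
    using assms(1,4) unfolding l2_has_sum_def by meson
  have "cmod (f x - (\<Sum>c\<in>F. g c x)) < \<epsilon>" if F: "finite F" "F0 \<subseteq> F" "F \<subseteq> C" for F
  proof -
    have "square_summable (\<lambda>x. f x - (\<Sum>c\<in>F. g c x))"
      using assms(2,3) F by (intro square_summable_diff square_summable_sum) auto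
    from abs_le_l2norm[OF this, of x] F0(3)[of F] F show ?thesis
      by simp
  qed
  with F0(1,2) show ?thesis
    using that by blast
qed

lemma hil_decomp_unique:
  assumes f: "f \<in> ell2 (bpaths G)" and g: "hil_decomp G f g" and c: "c \<in> tclasses G"
  shows "g c = proj_on c f"
proof
  fix x
  have gc: "\<And>c. c \<in> tclasses G \<Longrightarrow> g c \<in> ell2 c" and sum: "l2_has_sum g (tclasses G) f"
    using g by (auto simp: hil_decomp_def)
  show "g c x = proj_on c f x"
  proof (cases "x \<in> c")
    case False
    then show ?thesis
      using gc[OF c] by (simp add: ell2_iff proj_on_def)
  next
    case True
    then have x: "x \<in> bpaths G" "c = tclass G x"
      using c tclasses_subset_bpaths mem_tclasses_iff by blast+
    show ?thesis
    proof (rule ccontr)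
      assume "g c x \<noteq> proj_on c f x"
      then have "cmod (f x - g c x) > 0"
        using True by (simp add: proj_on_def)
      moreover have "square_summable f" "\<And>c. c \<in> tclasses G \<Longrightarrow> square_summable (g c)"
        using f gc by (auto simp: ell2_iff)
      ultimately obtain F0 where F0: "finite F0" "F0 \<subseteq> tclasses G"
        "\<And>F. finite F \<Longrightarrow> F0 \<subseteq> F \<Longrightarrow> F \<subseteq> tclasses G \<Longrightarrow>
           cmod (f x - (\<Sum>c\<in>F. g c x)) < cmod (f x - g c x)"
        using l2_has_sum_pointwise[OF sum] by metis
      have F: "finite (insert c F0)" "F0 \<subseteq> insert c F0" "insert c F0 \<subseteq> tclasses G"
        using F0 c by auto
      have supp: "y \<in> c'" if "c' \<in> insert c F0" "g c' y \<noteq> 0" for c' y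
        using gc[of c'] that F(3) by (auto simp: ell2_iff)
      have "(\<Sum>c'\<in>insert c F0. g c' x) = g c x"
        using sum_tclasses_apply[OF F(1,3) supp, where x=x] x by simp
      then show False
        using F0(3)[OF F] by simp
    qed
  qed
qed

lemma hil_direct_sum_tclasses: "hil_direct_sum G"
  unfolding hil_direct_sum_def
proof (intro conjI ballI impI)
  fix c
  assume "c \<in> tclasses G"
  then show "ell2 c \<subseteq> ell2 (bpaths G)"
    using tclasses_subset_bpaths by (auto simp: ell2_def)
  show "l2closed (ell2 c)"
    by (rule l2closed_ell2)
next
  fix c d f g
  assume cd: "c \<in> tclasses G" "d \<in> tclasses G" "c \<noteq> d" and "f \<in> ell2 c" "g \<in> ell2 d"
  have "x \<notin> c \<or> x \<notin> d" for x
    using cd mem_tclasses_iff[OF cd(1)] mem_tclasses_iff[OF cd(2)] tclasses_subset_bpaths[OF cd(1)] by blast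
  then have "cnj (f x) * g x = 0" for x
    using \<open>f \<in> ell2 c\<close> \<open>g \<in> ell2 d\<close> by (auto simp: ell2_iff)
  then have "(\<lambda>x. cnj (f x) * g x) = (\<lambda>x. 0)" ..
  then show "l2inner f g = 0"
    by (simp add: l2inner_def)
next
  fix f
  assume f: "f \<in> ell2 (bpaths G)"
  then have "proj_on c f \<in> ell2 c" for c
    using square_summable_le[of f "proj_on c f"] by (auto simp: ell2_iff proj_on_def)
  then have "hil_decomp G f (\<lambda>c. proj_on c f)"
    using l2_has_sum_proj_tclasses[OF f] by (simp add: hil_decomp_def)
  then show "\<exists>g. hil_decomp G f g"
    by blast
qed

lemma hil_rep_direct_sum_tclasses:
  fixes G :: "('v,'e) graph"
  assumes wf: "wf_graph G"
  shows "hil_rep_direct_sum G"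
  unfolding hil_rep_direct_sum_def
proof (intro allI impI, elim conjE)
  fix a :: "('v,'e,complex) lexpr" and f g
  assume a: "wf_expr G a" and f: "f \<in> ell2 (bpaths G)" and g: "hil_decomp G f g"
  have "snd (restrict_rep G (ell2 c)) a (g c) = proj_on c (evalop G a f)" if "c \<in> tclasses G" for c
  proof -
    have "g c \<in> ell2 c"
      using g that by (simp add: hil_decomp_def)
    then have "snd (restrict_rep G (ell2 c)) a (g c) = evalop G a (proj_on c f)"
      by (simp add: snd_restrict_rep[OF a] hil_decomp_unique[OF f g that])
    also have "\<dots> = proj_on c (evalop G a f)"
      by (rule evalop_proj_on[OF wf shift_saturated_tclasses[OF wf that] a])
    finally show ?thesis .
  qed
  moreover have "l2_has_sum (\<lambda>c. proj_on c (evalop G a f)) (tclasses G) (evalop G a f)"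
    using l2_has_sum_proj_tclasses evalop_in_ell2[OF wf shift_saturated_bpaths[OF wf] a f] .
  ultimately show "l2_has_sum (\<lambda>c. snd (restrict_rep G (ell2 c)) a (g c)) (tclasses G) (snd (piE G) a f)"
    using f by (simp add: l2_has_sum_cong piE_def snd_restrict_rep[OF a])
qed

theorem theorem3p14:
  fixes G :: "('v,'e) graph"
  assumes "wf_graph G"
  shows
   "((\<forall>\<alpha>\<in>bpaths G.
        invariant G (rho G :: ('v,'e,'k::field) rep) (Vspan (tclass G \<alpha>)) \<and>
        irreducible_alg G (rho_cls G \<alpha> :: ('v,'e,'k) rep)) \<and>
     alg_direct_sum G TYPE('k) \<and> alg_rep_direct_sum G TYPE('k) \<and>
     (\<forall>\<alpha>\<in>bpaths G. \<forall>\<beta>\<in>bpaths G.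
        (alg_equivalent G (rho_cls G \<alpha> :: ('v,'e,'k) rep) (rho_cls G \<beta>)
           \<longleftrightarrow> (rho_cls G \<alpha> :: ('v,'e,'k) rep) = rho_cls G \<beta>) \<and>
        ((rho_cls G \<alpha> :: ('v,'e,'k) rep) = rho_cls G \<beta> \<longleftrightarrow> tclass G \<alpha> = tclass G \<beta>)))
    \<and>
    ((\<forall>\<alpha>\<in>bpaths G.
        l2closed (ell2 (tclass G \<alpha>)) \<and>
        invariant G (piE G) (ell2 (tclass G \<alpha>)) \<and>
        irreducible_hil G (pi_cls G \<alpha>)) \<and>
     hil_direct_sum G \<and> hil_rep_direct_sum G \<and>
     (\<forall>\<alpha>\<in>bpaths G. \<forall>\<beta>\<in>bpaths G.
        (unitarily_equivalent G (pi_cls G \<alpha>) (pi_cls G \<beta>) \<longleftrightarrow> pi_cls G \<alpha> = pi_cls G \<beta>) \<and>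
        (pi_cls G \<alpha> = pi_cls G \<beta> \<longleftrightarrow> tclass G \<alpha> = tclass G \<beta>)))"
  using assms
  by (simp add: invariant_rho_Vspan_tclass irreducible_rho_cls alg_direct_sum_tclasses
      alg_rep_direct_sum_tclasses alg_equivalent_rho_cls_iff rho_cls_eq_iff
      l2closed_ell2 invariant_piE_ell2_tclass irreducible_pi_cls hil_direct_sum_tclasses
      hil_rep_direct_sum_tclasses unitarily_equivalent_pi_cls_iff pi_cls_eq_iff)

end
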